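(* Let $\mathcal W,\mathcal U,\mathcal V$ be finite, $\Phi_W$ and $\Phi_{U|W}$ codebook distributions and $\Phi_{V|W,U}$ a memoryless channel. Let $\mathcal B_1^{(n)}=\{w^n(j)\}_{j\in[2^{nR_1}]}$ have independent entries drawn from $\prod\Phi_W$, and $\mathcal B_2^{(n)}=\{u^n(w^n,k): w^n\in\mathcal B_1^{(n)},k\in[2^{nR_2}]\}$ independent entries with $u^n(w^n,k)\sim\prod_t\Phi_{U|W}(\cdot|w_t)$. With $J$ uniform on $[2^{nR_1}]$ and $K$ uniform on $[2^{nR_2}]$ independent, set $W^n=w^n(J)$, $U^n=u^n(W^n,K)$, and let $V^n$ be the output of $\prod\Phi_{V|W,U}$ on $(W^n,U^n)$, with distribution $P_{V^n}$; let $Q_{V^n}=\prod\Phi_V$ with $\Phi_V=\sum_{w,u}\Phi_W\Phi_{U|W}\Phi_{V|W,U}$. If $R_1>I(W;V)$, $R_2>I(W,U;V)-H(W)$ and $R_1+R_2>I(W,U;V)$, then $\lim_{n\to\infty}\mathbf E\|P_{V^n}-Q_{V^n}\|_{TV}=0$, with exponentially fast convergence in $n$.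
   Context: Information quantities in bits under $\Phi_W\Phi_{U|W}\Phi_{V|W,U}$; expectation over both random codebooks; total variation is half the $\ell_1$ distance. *)

theory Defs
  imports "HOL-Probability.Probability"
begin

text \<open>Entropy and mutual information in bits, for distributions on finite types
  (0 log 0 = 0 convention is automatic since 0 * _ = 0).\<close>

definition entropy_bits :: "'a::finite pmf \<Rightarrow> real" where
  "entropy_bits p = - (\<Sum>x\<in>UNIV. pmf p x * log 2 (pmf p x))"

definition mutual_info_bits :: "('a::finite \<times> 'b::finite) pmf \<Rightarrow> real" where
  "mutual_info_bits p = (\<Sum>xy\<in>UNIV. pmf p xy *
      log 2 (pmf p xy / (pmf (map_pmf fst p) (fst xy) * pmf (map_pmf snd p) (snd xy))))"

definition joint_WUV :: "'w pmf \<Rightarrow> ('w \<Rightarrow> 'u pmf) \<Rightarrow> ('w \<Rightarrow> 'u \<Rightarrow> 'v pmf) \<Rightarrow> ('w \<times> 'u \<times> 'v) pmf" where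
  "joint_WUV PW PUW PV = do { w \<leftarrow> PW; u \<leftarrow> PUW w; v \<leftarrow> PV w u; return_pmf (w, u, v) }"

definition marg_V :: "'w pmf \<Rightarrow> ('w \<Rightarrow> 'u pmf) \<Rightarrow> ('w \<Rightarrow> 'u \<Rightarrow> 'v pmf) \<Rightarrow> 'v pmf" where
  "marg_V PW PUW PV = map_pmf (\<lambda>(w, u, v). v) (joint_WUV PW PUW PV)"

text \<open>Codebook size [2^{nR}] = {0..< ceil(2^{nR})}.\<close>
definition cb_size :: "real \<Rightarrow> nat \<Rightarrow> nat" where
  "cb_size R n = nat \<lceil>2 powr (real n * R)\<rceil>"

text \<open>Length-n sequences are functions on {..<n} (extensional, undefined elsewhere).\<close>
definition seqs :: "nat \<Rightarrow> (nat \<Rightarrow> 'a) set" where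
  "seqs n = PiE {..<n} (\<lambda>_. UNIV)"

definition prod_seq :: "nat \<Rightarrow> (nat \<Rightarrow> 'a pmf) \<Rightarrow> (nat \<Rightarrow> 'a) pmf" where
  "prod_seq n p = Pi_pmf {..<n} undefined p"

definition codebook1_dist :: "'w pmf \<Rightarrow> real \<Rightarrow> nat \<Rightarrow> (nat \<Rightarrow> (nat \<Rightarrow> 'w)) pmf" where
  "codebook1_dist PW R1 n = Pi_pmf {..<cb_size R1 n} undefined (\<lambda>_. prod_seq n (\<lambda>_. PW))"

text \<open>Random codebook B2: (w^n, k) \<mapsto> u^n(w^n,k), independent, u^n(w^n,k) ~ \<prod>_t Phi_{U|W}(.|w_t).
  Entries are drawn for every w^n (only those in B1 are ever used).\<close>
definition codebook2_dist :: "('w::finite \<Rightarrow> 'u pmf) \<Rightarrow> real \<Rightarrow> nat \<Rightarrow> ((nat \<Rightarrow> 'w) \<times> nat \<Rightarrow> (nat \<Rightarrow> 'u)) pmf" where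
  "codebook2_dist PUW R2 n = Pi_pmf (seqs n \<times> {..<cb_size R2 n}) undefined
       (\<lambda>(wn, k). prod_seq n (\<lambda>t. PUW (wn t)))"

definition induced_V :: "('w \<Rightarrow> 'u \<Rightarrow> 'v pmf) \<Rightarrow> real \<Rightarrow> real \<Rightarrow> nat \<Rightarrow>
    (nat \<Rightarrow> (nat \<Rightarrow> 'w)) \<Rightarrow> ((nat \<Rightarrow> 'w) \<times> nat \<Rightarrow> (nat \<Rightarrow> 'u)) \<Rightarrow> (nat \<Rightarrow> 'v) pmf" where
  "induced_V PV R1 R2 n B1 B2 = do {
      J \<leftarrow> pmf_of_set {..<cb_size R1 n};
      K \<leftarrow> pmf_of_set {..<cb_size R2 n};
      let Wseq = B1 J;
      let Useq = B2 (Wseq, K);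
      prod_seq n (\<lambda>t. PV (Wseq t) (Useq t)) }"

definition tv_seq :: "nat \<Rightarrow> (nat \<Rightarrow> 'v::finite) pmf \<Rightarrow> (nat \<Rightarrow> 'v) pmf \<Rightarrow> real" where
  "tv_seq n P Q = (1/2) * (\<Sum>v\<in>seqs n. \<bar>pmf P v - pmf Q v\<bar>)"

definition expected_tv :: "'w::finite pmf \<Rightarrow> ('w \<Rightarrow> 'u pmf) \<Rightarrow> ('w \<Rightarrow> 'u \<Rightarrow> 'v::finite pmf) \<Rightarrow>
    real \<Rightarrow> real \<Rightarrow> nat \<Rightarrow> real" where
  "expected_tv PW PUW PV R1 R2 n =
     measure_pmf.expectation (pair_pmf (codebook1_dist PW R1 n) (codebook2_dist PUW R2 n))
       (\<lambda>(B1, B2). tv_seq n (induced_V PV R1 R2 n B1 B2) (prod_seq n (\<lambda>_. marg_V PW PUW PV)))"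

end

theory Submission
  imports Defs
begin

text \<open>The output law P_{V^n} is the average, over all N1 N2 codeword pairs, of memoryless
  channel laws. Split every channel probability into a jointly typical part and an atypical
  remainder. The remainder costs at most twice its mean, the probability that one of the
  information densities i(W,U;V), i(W;V), log Phi_W exceeds its expectation by delta per letter;
  this decays exponentially by Chernoff's bound. On the typical part the likelihood ratios against
  Q_{V^n} are at most 2^(n a1) and 2^(n a2) and the cloud centres have probability at most
  2^(n a3), so a second moment computation over both random codebooks (which has to track how
  often a cloud centre repeats) bounds the expected deviation by
  sqrt (2^(n a1) / (N1 N2) + 2^(n a2) / N1 + 2^(n (a1 + a3)) / N2).
  The three rate conditions make each of these terms exponentially small.\<close>

abbreviation \<E> :: "'a pmf \<Rightarrow> ('a \<Rightarrow> real) \<Rightarrow> real" where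
  "\<E> p f \<equiv> measure_pmf.expectation p f"

section \<open>Expectations over finitely supported distributions\<close>

lemma expectation_pmf_eq_sum:
  assumes "finite S" "set_pmf M \<subseteq> S"
  shows "\<E> M f = (\<Sum>x\<in>S. pmf M x * f x)"
  using assms by (subst integral_measure_pmf_real[of S]) (auto simp: mult.commute)

lemma finite_set_Pi_pmf:
  assumes "finite A" "\<And>i. i \<in> A \<Longrightarrow> finite (set_pmf (p i))"
  shows "finite (set_pmf (Pi_pmf A d p))"
  using assms by (subst set_Pi_pmf) auto

lemma expectation_bind_pmf:
  assumes S: "finite S" "set_pmf M \<subseteq> S" and N: "\<And>x. x \<in> S \<Longrightarrow> finite (set_pmf (N x))"
  shows "\<E> (bind_pmf M N) f = \<E> M (\<lambda>x. \<E> (N x) f)"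
proof -
  define T where "T = (\<Union>x\<in>S. set_pmf (N x))"
  have T: "finite T" using S N by (auto simp: T_def)
  have sub: "set_pmf (bind_pmf M N) \<subseteq> T" using S by (auto simp: T_def)
  have "\<E> (bind_pmf M N) f = (\<Sum>y\<in>T. (\<Sum>x\<in>S. pmf M x * pmf (N x) y) * f y)"
    by (subst expectation_pmf_eq_sum[OF T sub], intro sum.cong refl, subst pmf_bind,
        subst expectation_pmf_eq_sum[OF S]) auto
  also have "\<dots> = (\<Sum>x\<in>S. pmf M x * (\<Sum>y\<in>T. pmf (N x) y * f y))"
    by (simp add: sum_distrib_left sum_distrib_right mult.assoc sum.swap[of _ T])
  also have "\<dots> = \<E> M (\<lambda>x. \<E> (N x) f)"
    by (subst expectation_pmf_eq_sum[OF S], intro sum.cong refl,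
        subst expectation_pmf_eq_sum[OF T]) (auto simp: T_def)
  finally show ?thesis .
qed

lemma expectation_pair_pmf:
  assumes "finite (set_pmf M1)" "finite (set_pmf M2)"
  shows "\<E> (pair_pmf M1 M2) (\<lambda>(x, y). F x y) = \<E> M1 (\<lambda>x. \<E> M2 (\<lambda>y. F x y))"
proof -
  have "\<E> (pair_pmf M1 M2) (\<lambda>(x, y). F x y) =
        \<E> M1 (\<lambda>x. \<E> (bind_pmf M2 (\<lambda>y. return_pmf (x, y))) (\<lambda>(x, y). F x y))"
    unfolding pair_pmf_def using assms by (intro expectation_bind_pmf) auto
  also have "\<dots> = \<E> M1 (\<lambda>x. \<E> M2 (\<lambda>y. F x y))"
    using assms by (intro Bochner_Integration.integral_cong refl, subst expectation_bind_pmf) auto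
  finally show ?thesis .
qed

lemma expectation_pmf_sum:
  assumes "finite (set_pmf M)"
  shows "\<E> M (\<lambda>x. \<Sum>i\<in>I. F i x) = (\<Sum>i\<in>I. \<E> M (F i))"
  by (rule Bochner_Integration.integral_sum)
     (use assms in \<open>auto intro: integrable_measure_pmf_finite\<close>)

lemma expectation_pmf_add:
  assumes "finite (set_pmf M)"
  shows "\<E> M (\<lambda>x. F x + G x) = \<E> M F + \<E> M G"
  by (rule Bochner_Integration.integral_add)
     (use assms in \<open>auto intro: integrable_measure_pmf_finite\<close>)

lemma expectation_pmf_diff:
  assumes "finite (set_pmf M)"
  shows "\<E> M (\<lambda>x. F x - G x) = \<E> M F - \<E> M G"
  by (rule Bochner_Integration.integral_diff)
     (use assms in \<open>auto intro: integrable_measure_pmf_finite\<close>)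

lemma expectation_pmf_mono:
  assumes "finite (set_pmf M)" "\<And>x. x \<in> set_pmf M \<Longrightarrow> F x \<le> G x"
  shows "\<E> M F \<le> \<E> M G"
  using assms
  by (intro integral_mono_AE) (auto intro: integrable_measure_pmf_finite simp: AE_measure_pmf_iff)

lemma expectation_pmf_nonneg:
  assumes "\<And>x. x \<in> set_pmf M \<Longrightarrow> 0 \<le> F x"
  shows "0 \<le> \<E> M F"
  using assms by (intro integral_nonneg_AE) (auto simp: AE_measure_pmf_iff)

lemma expectation_pmf_indicator:
  assumes "finite S" "set_pmf p \<subseteq> S" "w \<in> S"
  shows "\<E> p (\<lambda>x. if x = w then 1 else 0) = pmf p w"
  using assms by (subst expectation_pmf_eq_sum[OF assms(1,2)]) (simp add: if_distrib cong: if_cong)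

lemma expectation_pmf_abs_squared_le:
  assumes "finite (set_pmf M)"
  shows "(\<E> M (\<lambda>x. \<bar>F x\<bar>))\<^sup>2 \<le> \<E> M (\<lambda>x. (F x)\<^sup>2)"
proof -
  define c where "c = \<E> M (\<lambda>x. \<bar>F x\<bar>)"
  have "0 \<le> \<E> M (\<lambda>x. (\<bar>F x\<bar> - c)\<^sup>2)" by (rule expectation_pmf_nonneg) auto
  also have "\<E> M (\<lambda>x. (\<bar>F x\<bar> - c)\<^sup>2) = \<E> M (\<lambda>x. (F x)\<^sup>2 - 2 * c * \<bar>F x\<bar> + c\<^sup>2)"
    by (intro Bochner_Integration.integral_cong refl) (simp add: power2_diff)
  also have "\<dots> = \<E> M (\<lambda>x. (F x)\<^sup>2) - 2 * c * c + c\<^sup>2"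
    using assms by (simp add: expectation_pmf_add expectation_pmf_diff c_def)
  finally show ?thesis by (simp add: c_def power2_eq_square)
qed

lemma expectation_pmf_square_shift:
  assumes "finite (set_pmf M)" "\<E> M X = z"
  shows "\<E> M (\<lambda>x. (X x - c)\<^sup>2) = \<E> M (\<lambda>x. (X x - z)\<^sup>2) + (z - c)\<^sup>2"
proof -
  have expand: "\<E> M (\<lambda>x. (X x - a)\<^sup>2) = \<E> M (\<lambda>x. (X x)\<^sup>2) - 2 * a * z + a\<^sup>2" for a
  proof -
    have "\<E> M (\<lambda>x. (X x - a)\<^sup>2) = \<E> M (\<lambda>x. (X x)\<^sup>2 - 2 * a * X x + a\<^sup>2)"
      by (intro Bochner_Integration.integral_cong refl) (simp add: power2_diff algebra_simps)
    then show ?thesis using assms by (simp add: expectation_pmf_add expectation_pmf_diff)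
  qed
  show ?thesis unfolding expand by (simp add: power2_eq_square algebra_simps)
qed

lemma expectation_Pi_pmf_component:
  assumes "finite A" "i \<in> A"
  shows "\<E> (Pi_pmf A d p) (\<lambda>f. F (f i)) = \<E> (p i) F"
proof -
  have "\<E> (Pi_pmf A d p) (\<lambda>f. F (f i)) = \<E> (map_pmf (\<lambda>f. f i) (Pi_pmf A d p)) F"
    by simp
  then show ?thesis using assms by (simp add: Pi_pmf_component)
qed

lemma expectation_Pi_pmf_two_components:
  fixes F G :: "'b \<Rightarrow> real"
  assumes "finite A" "i \<in> A" "j \<in> A" "i \<noteq> j"
    and "\<And>k. k \<in> A \<Longrightarrow> finite (set_pmf (p k))"
    and "\<And>x. 0 \<le> F x" "\<And>x. 0 \<le> G x"
  shows "\<E> (Pi_pmf A d p) (\<lambda>f. F (f i) * G (f j)) = \<E> (p i) F * \<E> (p j) G"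
proof -
  define H where "H = (\<lambda>k. if k = i then F else if k = j then G else (\<lambda>_. 1::real))"
  have pick: "(\<Prod>k\<in>A. c k) = c i * c j" if "\<And>k. k \<in> A - {i, j} \<Longrightarrow> c k = 1" for c :: "_ \<Rightarrow> real"
  proof -
    have "(\<Prod>k\<in>A. c k) = c i * (c j * (\<Prod>k\<in>A-{i}-{j}. c k))"
      using assms by (simp add: prod.remove[of A i] prod.remove[of "A - {i}" j])
    also have "(\<Prod>k\<in>A-{i}-{j}. c k) = 1" using that by (intro prod.neutral) auto
    finally show ?thesis by simp
  qed
  have "\<E> (Pi_pmf A d p) (\<lambda>f. F (f i) * G (f j)) = \<E> (Pi_pmf A d p) (\<lambda>f. \<Prod>k\<in>A. H k (f k))"
    using assms by (subst pick) (auto simp: H_def)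
  also have "\<dots> = (\<Prod>k\<in>A. \<E> (p k) (H k))"
    using assms
    by (intro expectation_prod_Pi_pmf) (auto simp: H_def intro: integrable_measure_pmf_finite)
  also have "\<dots> = \<E> (p i) F * \<E> (p j) G"
    using assms by (subst pick) (auto simp: H_def)
  finally show ?thesis .
qed

lemma expectation_Pi_pmf_sum:
  assumes "finite A" "\<And>k. k \<in> A \<Longrightarrow> finite (set_pmf (p k))"
  shows "\<E> (Pi_pmf A d p) (\<lambda>f. \<Sum>i\<in>A. F i (f i)) = (\<Sum>i\<in>A. \<E> (p i) (F i))"
  using assms finite_set_Pi_pmf[OF assms]
  by (simp add: expectation_pmf_sum expectation_Pi_pmf_component)

lemma second_moment_Pi_pmf_sum:
  fixes F :: "'i \<Rightarrow> 'b \<Rightarrow> real"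
  assumes A: "finite A" and fin: "\<And>k. k \<in> A \<Longrightarrow> finite (set_pmf (p k))"
    and nn: "\<And>k x. 0 \<le> F k x"
  shows "\<E> (Pi_pmf A d p) (\<lambda>f. (\<Sum>i\<in>A. F i (f i))\<^sup>2) =
     (\<Sum>i\<in>A. \<E> (p i) (F i))\<^sup>2 + (\<Sum>i\<in>A. \<E> (p i) (\<lambda>x. (F i x)\<^sup>2) - (\<E> (p i) (F i))\<^sup>2)"
proof -
  let ?M = "Pi_pmf A d p" and ?e = "\<lambda>i. \<E> (p i) (F i)"
  have cross: "\<E> ?M (\<lambda>f. F i (f i) * F j (f j)) =
      ?e i * ?e j + (if i = j then \<E> (p i) (\<lambda>x. (F i x)\<^sup>2) - (?e i)\<^sup>2 else 0)"
    if "i \<in> A" "j \<in> A" for i j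
  proof (cases "i = j")
    case True
    then show ?thesis
      using expectation_Pi_pmf_component[OF A that(1), of d p "\<lambda>x. (F i x)\<^sup>2"]
      by (simp add: power2_eq_square)
  qed (use expectation_Pi_pmf_two_components[OF A that _ fin nn nn] in simp)
  have "\<E> ?M (\<lambda>f. (\<Sum>i\<in>A. F i (f i))\<^sup>2) = (\<Sum>i\<in>A. \<Sum>j\<in>A. \<E> ?M (\<lambda>f. F i (f i) * F j (f j)))"
    using finite_set_Pi_pmf[OF A fin]
    by (simp add: power2_eq_square sum_product expectation_pmf_sum)
  also have "\<dots> = (\<Sum>i\<in>A. \<Sum>j\<in>A. ?e i * ?e j) +
      (\<Sum>i\<in>A. \<Sum>j\<in>A. if i = j then \<E> (p i) (\<lambda>x. (F i x)\<^sup>2) - (?e i)\<^sup>2 else 0)"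
    by (simp add: cross sum.distrib)
  finally show ?thesis
    using A by (simp add: power2_eq_square sum_product)
qed

lemma variance_Pi_pmf_sum_le:
  fixes F :: "'i \<Rightarrow> 'b \<Rightarrow> real"
  assumes A: "finite A" and fin: "\<And>k. k \<in> A \<Longrightarrow> finite (set_pmf (p k))"
    and nn: "\<And>k x. 0 \<le> F k x"
  shows "\<E> (Pi_pmf A d p) (\<lambda>f. ((\<Sum>i\<in>A. F i (f i)) - (\<Sum>i\<in>A. \<E> (p i) (F i)))\<^sup>2) \<le>
     (\<Sum>i\<in>A. \<E> (p i) (\<lambda>x. (F i x)\<^sup>2))"
proof -
  let ?M = "Pi_pmf A d p" and ?m = "\<Sum>i\<in>A. \<E> (p i) (F i)"
  have "\<E> ?M (\<lambda>f. ((\<Sum>i\<in>A. F i (f i)) - ?m)\<^sup>2) + (?m - 0)\<^sup>2 = \<E> ?M (\<lambda>f. ((\<Sum>i\<in>A. F i (f i)) - 0)\<^sup>2)"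
    by (rule expectation_pmf_square_shift[symmetric, OF finite_set_Pi_pmf[OF A fin]
          expectation_Pi_pmf_sum[OF A fin]])
  also have "\<dots> = ?m\<^sup>2 + (\<Sum>i\<in>A. \<E> (p i) (\<lambda>x. (F i x)\<^sup>2) - (\<E> (p i) (F i))\<^sup>2)"
    using second_moment_Pi_pmf_sum[OF A fin nn] by simp
  finally have "\<E> ?M (\<lambda>f. ((\<Sum>i\<in>A. F i (f i)) - ?m)\<^sup>2) =
      (\<Sum>i\<in>A. \<E> (p i) (\<lambda>x. (F i x)\<^sup>2) - (\<E> (p i) (F i))\<^sup>2)" by simp
  also have "\<dots> \<le> (\<Sum>i\<in>A. \<E> (p i) (\<lambda>x. (F i x)\<^sup>2))"
    by (intro sum_mono) auto
  finally show ?thesis .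
qed

section \<open>Second moments of superposition codebooks\<close>

definition outer_codebook :: "nat \<Rightarrow> 'a pmf \<Rightarrow> (nat \<Rightarrow> 'a) pmf" where
  "outer_codebook N p = Pi_pmf {..<N} undefined (\<lambda>_. p)"

definition inner_codebook :: "'a set \<Rightarrow> nat \<Rightarrow> ('a \<Rightarrow> 'b pmf) \<Rightarrow> ('a \<times> nat \<Rightarrow> 'b) pmf" where
  "inner_codebook S N q = Pi_pmf (S \<times> {..<N}) undefined (\<lambda>(w, k). q w)"

definition superposition_sum ::
    "nat \<Rightarrow> nat \<Rightarrow> ('a \<Rightarrow> 'b \<Rightarrow> real) \<Rightarrow> (nat \<Rightarrow> 'a) \<Rightarrow> ('a \<times> nat \<Rightarrow> 'b) \<Rightarrow> real" where
  "superposition_sum N1 N2 h B1 B2 = (\<Sum>j<N1. \<Sum>k<N2. h (B1 j) (B2 (B1 j, k)))"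

definition codeword_count :: "nat \<Rightarrow> (nat \<Rightarrow> 'a) \<Rightarrow> 'a \<Rightarrow> real" where
  "codeword_count N B1 w = (\<Sum>j<N. if B1 j = w then 1 else 0)"

lemma codeword_count_nonneg [simp]: "0 \<le> codeword_count N B1 w"
  unfolding codeword_count_def by (rule sum_nonneg) simp

lemma finite_set_outer_codebook:
  "finite (set_pmf p) \<Longrightarrow> finite (set_pmf (outer_codebook N p))"
  unfolding outer_codebook_def by (rule finite_set_Pi_pmf) auto

lemma finite_set_inner_codebook:
  "finite S \<Longrightarrow> (\<And>w. finite (set_pmf (q w))) \<Longrightarrow> finite (set_pmf (inner_codebook S N q))"
  unfolding inner_codebook_def by (rule finite_set_Pi_pmf) auto

lemma outer_codebook_entry_in_set:
  "B1 \<in> set_pmf (outer_codebook N p) \<Longrightarrow> j < N \<Longrightarrow> B1 j \<in> set_pmf p"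
  unfolding outer_codebook_def by (auto simp: set_Pi_pmf PiE_dflt_def)

lemma sum_comp_eq_codeword_count_sum:
  fixes G :: "'a \<Rightarrow> real"
  assumes "finite S" "\<forall>j<N. B1 j \<in> S"
  shows "(\<Sum>j<N. G (B1 j)) = (\<Sum>w\<in>S. codeword_count N B1 w * G w)"
proof -
  have "(\<Sum>j<N. G (B1 j)) = (\<Sum>j<N. \<Sum>w\<in>S. if B1 j = w then G w else 0)"
    using assms by (simp add: sum.delta)
  also have "\<dots> = (\<Sum>w\<in>S. codeword_count N B1 w * G w)"
    unfolding codeword_count_def by (subst sum.swap) (auto simp: sum_distrib_right intro!: sum.cong)
  finally show ?thesis .
qed

text \<open>Reindexed by the entries of the inner codebook the terms become independent; repeated
  cloud centres only show up as weights.\<close>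

lemma superposition_sum_eq_sum_entries:
  assumes "finite S" "\<forall>j<N1. B1 j \<in> S"
  shows "superposition_sum N1 N2 h B1 B2 =
    (\<Sum>(w, k)\<in>S \<times> {..<N2}. codeword_count N1 B1 w * h w (B2 (w, k)))"
proof -
  have "superposition_sum N1 N2 h B1 B2 =
      (\<Sum>w\<in>S. codeword_count N1 B1 w * (\<Sum>k<N2. h w (B2 (w, k))))"
    unfolding superposition_sum_def by (rule sum_comp_eq_codeword_count_sum[OF assms])
  then show ?thesis by (simp add: sum_distrib_left sum.cartesian_product)
qed

lemma sum_Times_lessThan_const:
  fixes G :: "'a \<Rightarrow> real"
  assumes "finite S"
  shows "(\<Sum>(w, k)\<in>S \<times> {..<N}. G w) = real N * (\<Sum>w\<in>S. G w)"
  using assms by (simp add: sum.cartesian_product[symmetric] sum_distrib_left)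

lemma inner_codebook_mean:
  assumes S: "finite S" and B1: "\<forall>j<N1. B1 j \<in> S"
    and finq: "\<And>w. finite (set_pmf (q w))"
  shows "\<E> (inner_codebook S N2 q) (superposition_sum N1 N2 h B1) =
    real N2 * (\<Sum>j<N1. \<E> (q (B1 j)) (h (B1 j)))"
proof -
  let ?I = "S \<times> {..<N2}"
  have "\<E> (inner_codebook S N2 q) (superposition_sum N1 N2 h B1) =
      \<E> (Pi_pmf ?I undefined (\<lambda>(w, k). q w))
        (\<lambda>B2. \<Sum>i\<in>?I. (\<lambda>(w, k) u. codeword_count N1 B1 w * h w u) i (B2 i))"
    unfolding inner_codebook_def superposition_sum_eq_sum_entries[OF S B1, abs_def]
    by (simp add: split_beta)
  also have "\<dots> = (\<Sum>(w, k)\<in>?I. codeword_count N1 B1 w * \<E> (q w) (h w))"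
    using S finq by (subst expectation_Pi_pmf_sum) (auto simp: split_beta)
  also have "\<dots> = real N2 * (\<Sum>w\<in>S. codeword_count N1 B1 w * \<E> (q w) (h w))"
    using S by (rule sum_Times_lessThan_const)
  also have "\<dots> = real N2 * (\<Sum>j<N1. \<E> (q (B1 j)) (h (B1 j)))"
    by (simp add: sum_comp_eq_codeword_count_sum[OF S B1, where G = "\<lambda>w. \<E> (q w) (h w)"])
  finally show ?thesis .
qed

lemma inner_codebook_variance_le:
  assumes S: "finite S" and B1: "\<forall>j<N1. B1 j \<in> S"
    and finq: "\<And>w. finite (set_pmf (q w))" and hnn: "\<And>w u. 0 \<le> h w u"
  shows "\<E> (inner_codebook S N2 q)
      (\<lambda>B2. (superposition_sum N1 N2 h B1 B2 - real N2 * (\<Sum>j<N1. \<E> (q (B1 j)) (h (B1 j))))\<^sup>2)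
    \<le> real N2 * (\<Sum>w\<in>S. (codeword_count N1 B1 w)\<^sup>2 * \<E> (q w) (\<lambda>u. (h w u)\<^sup>2))"
proof -
  let ?I = "S \<times> {..<N2}"
  define F where "F = (\<lambda>(w, k::nat) u. codeword_count N1 B1 w * h w u)"
  have Fnn: "0 \<le> F i u" for i u
    using hnn by (simp add: F_def split_beta)
  have mean: "(\<Sum>i\<in>?I. \<E> ((\<lambda>(w, k). q w) i) (F i)) =
      real N2 * (\<Sum>j<N1. \<E> (q (B1 j)) (h (B1 j)))"
  proof -
    have "(\<Sum>i\<in>?I. \<E> ((\<lambda>(w, k). q w) i) (F i)) =
        (\<Sum>(w, k)\<in>?I. codeword_count N1 B1 w * \<E> (q w) (h w))"
      by (intro sum.cong refl) (auto simp: F_def)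
    also have "\<dots> = real N2 * (\<Sum>w\<in>S. codeword_count N1 B1 w * \<E> (q w) (h w))"
      using S by (rule sum_Times_lessThan_const)
    finally show ?thesis
      by (simp add: sum_comp_eq_codeword_count_sum[OF S B1, where G = "\<lambda>w. \<E> (q w) (h w)"])
  qed
  have "\<E> (inner_codebook S N2 q)
      (\<lambda>B2. (superposition_sum N1 N2 h B1 B2 - real N2 * (\<Sum>j<N1. \<E> (q (B1 j)) (h (B1 j))))\<^sup>2)
    = \<E> (Pi_pmf ?I undefined (\<lambda>(w, k). q w))
        (\<lambda>B2. ((\<Sum>i\<in>?I. F i (B2 i)) - (\<Sum>i\<in>?I. \<E> ((\<lambda>(w, k). q w) i) (F i)))\<^sup>2)"
    unfolding inner_codebook_def mean superposition_sum_eq_sum_entries[OF S B1]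
    by (simp add: F_def split_beta)
  also have "\<dots> \<le> (\<Sum>i\<in>?I. \<E> ((\<lambda>(w, k). q w) i) (\<lambda>x. (F i x)\<^sup>2))"
    using S finq by (intro variance_Pi_pmf_sum_le Fnn) (auto simp: split_beta)
  also have "\<dots> = (\<Sum>(w, k)\<in>?I. (codeword_count N1 B1 w)\<^sup>2 * \<E> (q w) (\<lambda>u. (h w u)\<^sup>2))"
    by (intro sum.cong refl) (auto simp: F_def power_mult_distrib)
  also have "\<dots> = real N2 * (\<Sum>w\<in>S. (codeword_count N1 B1 w)\<^sup>2 * \<E> (q w) (\<lambda>u. (h w u)\<^sup>2))"
    using S by (rule sum_Times_lessThan_const)
  finally show ?thesis .
qed

lemma codeword_count_second_moment_le:
  assumes S: "finite S" "set_pmf p \<subseteq> S" and w: "w \<in> S"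
  shows "\<E> (outer_codebook N p) (\<lambda>B1. (codeword_count N B1 w)\<^sup>2) \<le>
    (real N)\<^sup>2 * (pmf p w)\<^sup>2 + real N * pmf p w"
proof -
  have finp: "finite (set_pmf p)" using S finite_subset by blast
  have "\<E> (outer_codebook N p) (\<lambda>B1. (codeword_count N B1 w)\<^sup>2) =
      (\<Sum>j<N. \<E> p (\<lambda>x. if x = w then 1 else 0))\<^sup>2 +
      (\<Sum>j<N. \<E> p (\<lambda>x. (if x = w then 1 else 0)\<^sup>2) - (\<E> p (\<lambda>x. if x = w then 1 else 0))\<^sup>2)"
    unfolding outer_codebook_def codeword_count_def
    by (rule second_moment_Pi_pmf_sum[where F = "\<lambda>j x. if x = w then 1 else 0"]) (auto simp: finp)
  also have "\<dots> = (real N * pmf p w)\<^sup>2 + real N * (pmf p w - (pmf p w)\<^sup>2)"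
  proof -
    have "(\<lambda>x. (if x = w then 1 else 0::real)\<^sup>2) = (\<lambda>x. if x = w then 1 else 0)" by auto
    then show ?thesis using expectation_pmf_indicator[OF S w] by simp
  qed
  also have "\<dots> \<le> (real N)\<^sup>2 * (pmf p w)\<^sup>2 + real N * pmf p w"
    by (simp add: power_mult_distrib algebra_simps)
  finally show ?thesis .
qed

lemma superposition_sum_mean:
  assumes S: "finite S" "set_pmf p \<subseteq> S" and finq: "\<And>w. finite (set_pmf (q w))"
  shows "\<E> (outer_codebook N1 p) (\<lambda>B1. \<E> (inner_codebook S N2 q) (superposition_sum N1 N2 h B1)) =
    real N1 * real N2 * \<E> p (\<lambda>w. \<E> (q w) (h w))"
proof -
  have "\<E> (outer_codebook N1 p) (\<lambda>B1. \<E> (inner_codebook S N2 q) (superposition_sum N1 N2 h B1)) =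
      \<E> (outer_codebook N1 p) (\<lambda>B1. real N2 * (\<Sum>j<N1. \<E> (q (B1 j)) (h (B1 j))))"
    using S by (intro integral_cong_AE)
      (auto simp: AE_measure_pmf_iff subset_iff intro!: inner_codebook_mean[OF _ _ finq]
        dest: outer_codebook_entry_in_set)
  also have "\<dots> = real N2 * (real N1 * \<E> p (\<lambda>w. \<E> (q w) (h w)))"
    using finite_subset[OF S(2,1)] unfolding outer_codebook_def
    by (subst integral_mult_right_zero, subst expectation_Pi_pmf_sum) auto
  finally show ?thesis by simp
qed

lemma codeword_count_weighted_second_moment_le:
  assumes S: "finite S" "set_pmf p \<subseteq> S" and e: "\<And>w. 0 \<le> e w"
  shows "\<E> (outer_codebook N p) (\<lambda>B1. \<Sum>w\<in>S. (codeword_count N B1 w)\<^sup>2 * e w) \<le>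
    real N * \<E> p e + (real N)\<^sup>2 * \<E> p (\<lambda>w. pmf p w * e w)"
proof -
  have "finite (set_pmf p)" using S finite_subset by blast
  then have "\<E> (outer_codebook N p) (\<lambda>B1. \<Sum>w\<in>S. (codeword_count N B1 w)\<^sup>2 * e w) =
      (\<Sum>w\<in>S. \<E> (outer_codebook N p) (\<lambda>B1. (codeword_count N B1 w)\<^sup>2) * e w)"
    by (simp add: expectation_pmf_sum finite_set_outer_codebook)
  also have "\<dots> \<le> (\<Sum>w\<in>S. ((real N)\<^sup>2 * (pmf p w)\<^sup>2 + real N * pmf p w) * e w)"
    by (intro sum_mono mult_right_mono codeword_count_second_moment_le[OF S] e)
  also have "\<dots> = real N * \<E> p e + (real N)\<^sup>2 * \<E> p (\<lambda>w. pmf p w * e w)"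
    by (simp add: expectation_pmf_eq_sum[OF S] sum_distrib_left sum.distrib
        algebra_simps power2_eq_square)
  finally show ?thesis .
qed

lemma outer_codebook_variance_le:
  assumes "finite (set_pmf p)" "\<And>w. 0 \<le> g w"
  shows "\<E> (outer_codebook N p) (\<lambda>B1. ((\<Sum>j<N. g (B1 j)) - real N * \<E> p g)\<^sup>2) \<le>
    real N * \<E> p (\<lambda>w. (g w)\<^sup>2)"
  using variance_Pi_pmf_sum_le[where F = "\<lambda>j. g" and A = "{..<N}" and p = "\<lambda>_. p"] assms
  by (simp add: outer_codebook_def)

lemma superposition_sum_variance_le:
  assumes S: "finite S" "set_pmf p \<subseteq> S"
    and finq: "\<And>w. finite (set_pmf (q w))" and hnn: "\<And>w u. 0 \<le> h w u"
  defines "m \<equiv> \<E> p (\<lambda>w. \<E> (q w) (h w))"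
  shows "\<E> (outer_codebook N1 p) (\<lambda>B1. \<E> (inner_codebook S N2 q)
        (\<lambda>B2. (superposition_sum N1 N2 h B1 B2 - real N1 * real N2 * m)\<^sup>2)) \<le>
      real N2 * real N1 * \<E> p (\<lambda>w. \<E> (q w) (\<lambda>u. (h w u)\<^sup>2))
    + real N2 * (real N1)\<^sup>2 * \<E> p (\<lambda>w. pmf p w * \<E> (q w) (\<lambda>u. (h w u)\<^sup>2))
    + (real N2)\<^sup>2 * real N1 * \<E> p (\<lambda>w. (\<E> (q w) (h w))\<^sup>2)"
proof -
  let ?M1 = "outer_codebook N1 p" and ?M2 = "inner_codebook S N2 q"
  define g where "g = (\<lambda>w. \<E> (q w) (h w))"
  define e where "e = (\<lambda>w. \<E> (q w) (\<lambda>u. (h w u)\<^sup>2))"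
  have finp: "finite (set_pmf p)" using S finite_subset by blast
  have finM1: "finite (set_pmf ?M1)" using finp by (rule finite_set_outer_codebook)
  have finM2: "finite (set_pmf ?M2)" using S finq by (intro finite_set_inner_codebook)
  have gnn: "0 \<le> g w" and enn: "0 \<le> e w" for w
    unfolding g_def e_def by (auto intro!: expectation_pmf_nonneg hnn)
  have "\<E> ?M1 (\<lambda>B1. \<E> ?M2 (\<lambda>B2. (superposition_sum N1 N2 h B1 B2 - real N1 * real N2 * m)\<^sup>2)) \<le>
     \<E> ?M1 (\<lambda>B1. real N2 * (\<Sum>w\<in>S. (codeword_count N1 B1 w)\<^sup>2 * e w)
       + (real N2)\<^sup>2 * ((\<Sum>j<N1. g (B1 j)) - real N1 * \<E> p g)\<^sup>2)"
  proof (rule expectation_pmf_mono[OF finM1])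
    fix B1 assume "B1 \<in> set_pmf ?M1"
    then have B1: "\<forall>j<N1. B1 j \<in> S" using S by (auto dest: outer_codebook_entry_in_set)
    have "\<E> ?M2 (\<lambda>B2. (superposition_sum N1 N2 h B1 B2 - real N1 * real N2 * m)\<^sup>2) =
      \<E> ?M2 (\<lambda>B2. (superposition_sum N1 N2 h B1 B2 - real N2 * (\<Sum>j<N1. g (B1 j)))\<^sup>2)
       + (real N2 * (\<Sum>j<N1. g (B1 j)) - real N1 * real N2 * m)\<^sup>2"
      unfolding g_def
      by (rule expectation_pmf_square_shift[OF finM2 inner_codebook_mean[OF S(1) B1 finq]])
    moreover have "\<E> ?M2 (\<lambda>B2. (superposition_sum N1 N2 h B1 B2 - real N2 * (\<Sum>j<N1. g (B1 j)))\<^sup>2)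
      \<le> real N2 * (\<Sum>w\<in>S. (codeword_count N1 B1 w)\<^sup>2 * e w)"
      unfolding g_def e_def by (rule inner_codebook_variance_le[OF S(1) B1 finq hnn])
    moreover have "(real N2 * (\<Sum>j<N1. g (B1 j)) - real N1 * real N2 * m)\<^sup>2 =
        (real N2)\<^sup>2 * ((\<Sum>j<N1. g (B1 j)) - real N1 * \<E> p g)\<^sup>2"
      by (simp add: m_def g_def power2_eq_square algebra_simps)
    ultimately show "\<E> ?M2 (\<lambda>B2. (superposition_sum N1 N2 h B1 B2 - real N1 * real N2 * m)\<^sup>2) \<le>
      real N2 * (\<Sum>w\<in>S. (codeword_count N1 B1 w)\<^sup>2 * e w)
       + (real N2)\<^sup>2 * ((\<Sum>j<N1. g (B1 j)) - real N1 * \<E> p g)\<^sup>2"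
      by simp
  qed
  also have "\<dots> = real N2 * \<E> ?M1 (\<lambda>B1. \<Sum>w\<in>S. (codeword_count N1 B1 w)\<^sup>2 * e w) +
      (real N2)\<^sup>2 * \<E> ?M1 (\<lambda>B1. ((\<Sum>j<N1. g (B1 j)) - real N1 * \<E> p g)\<^sup>2)"
    using finM1 by (simp add: expectation_pmf_add)
  also have "\<dots> \<le> real N2 * (real N1 * \<E> p e + (real N1)\<^sup>2 * \<E> p (\<lambda>w. pmf p w * e w)) +
      (real N2)\<^sup>2 * (real N1 * \<E> p (\<lambda>w. (g w)\<^sup>2))"
    by (intro add_mono mult_left_mono codeword_count_weighted_second_moment_le[OF S enn]
        outer_codebook_variance_le[OF finp gnn]) simp_all
  finally show ?thesis
    by (simp add: e_def g_def distrib_left mult_ac)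
qed

lemma superposition_average_deviation_le:
  assumes S: "finite S" "set_pmf p \<subseteq> S"
    and finq: "\<And>w. finite (set_pmf (q w))" and hnn: "\<And>w u. 0 \<le> h w u"
    and N: "N1 > 0" "N2 > 0"
    and m_def: "m = \<E> p (\<lambda>w. \<E> (q w) (h w))"
    and ha: "\<E> p (\<lambda>w. \<E> (q w) (\<lambda>u. (h w u)\<^sup>2)) \<le> Ka * m"
    and hb: "\<E> p (\<lambda>w. (\<E> (q w) (h w))\<^sup>2) \<le> Kb * m"
    and hc: "\<E> p (\<lambda>w. pmf p w * \<E> (q w) (\<lambda>u. (h w u)\<^sup>2)) \<le> Kc * m"
  shows "\<E> (pair_pmf (outer_codebook N1 p) (inner_codebook S N2 q))
      (\<lambda>(B1, B2). \<bar>superposition_sum N1 N2 h B1 B2 / (real N1 * real N2) - m\<bar>)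
    \<le> sqrt ((Ka / (real N1 * real N2) + Kb / real N1 + Kc / real N2) * m)"
proof -
  let ?M1 = "outer_codebook N1 p" and ?M2 = "inner_codebook S N2 q" and ?N = "real N1 * real N2"
  have finM1: "finite (set_pmf ?M1)" using S finite_subset by (intro finite_set_outer_codebook) blast
  have finM2: "finite (set_pmf ?M2)" using S finq by (intro finite_set_inner_codebook)
  let ?X = "\<lambda>(B1, B2). superposition_sum N1 N2 h B1 B2 / ?N - m"
  have "(\<E> (pair_pmf ?M1 ?M2) (\<lambda>x. \<bar>?X x\<bar>))\<^sup>2 \<le> \<E> (pair_pmf ?M1 ?M2) (\<lambda>x. (?X x)\<^sup>2)"
    using finM1 finM2 by (intro expectation_pmf_abs_squared_le) simp
  also have "\<dots> = \<E> ?M1 (\<lambda>B1. \<E> ?M2 (\<lambda>B2. (superposition_sum N1 N2 h B1 B2 - ?N * m)\<^sup>2)) / ?N\<^sup>2"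
  proof -
    have "(superposition_sum N1 N2 h B1 B2 / ?N - m)\<^sup>2 =
        (superposition_sum N1 N2 h B1 B2 - ?N * m)\<^sup>2 / ?N\<^sup>2" for B1 B2
      using N by (simp add: field_simps power2_eq_square)
    then show ?thesis
      using expectation_pair_pmf[OF finM1 finM2,
          of "\<lambda>B1 B2. (superposition_sum N1 N2 h B1 B2 / ?N - m)\<^sup>2"]
      by (simp add: split_beta')
  qed
  also have "\<dots> \<le> (real N2 * real N1 * \<E> p (\<lambda>w. \<E> (q w) (\<lambda>u. (h w u)\<^sup>2))
      + real N2 * (real N1)\<^sup>2 * \<E> p (\<lambda>w. pmf p w * \<E> (q w) (\<lambda>u. (h w u)\<^sup>2))
      + (real N2)\<^sup>2 * real N1 * \<E> p (\<lambda>w. (\<E> (q w) (h w))\<^sup>2)) / ?N\<^sup>2"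
    unfolding m_def by (intro divide_right_mono superposition_sum_variance_le[OF S finq hnn]) simp
  also have "\<dots> = \<E> p (\<lambda>w. \<E> (q w) (\<lambda>u. (h w u)\<^sup>2)) / ?N
      + \<E> p (\<lambda>w. (\<E> (q w) (h w))\<^sup>2) / real N1
      + \<E> p (\<lambda>w. pmf p w * \<E> (q w) (\<lambda>u. (h w u)\<^sup>2)) / real N2"
    using N by (simp add: field_simps power2_eq_square)
  also have "\<dots> \<le> Ka * m / ?N + Kb * m / real N1 + Kc * m / real N2"
    by (intro add_mono divide_right_mono ha hb hc) auto
  also have "\<dots> = (Ka / ?N + Kb / real N1 + Kc / real N2) * m"
    by (simp add: field_simps)
  finally show ?thesis
    by (simp add: real_le_rsqrt split_beta')
qed

lemma typical_likelihood_moments_le: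
  fixes T1 T2 \<beta> :: real and v :: 'c
  assumes finp: "finite (set_pmf p)" and finq: "\<And>w. finite (set_pmf (q w))"
    and T: "0 \<le> T1" "0 \<le> \<beta>"
    and h1: "\<And>w u. w \<in> set_pmf p \<Longrightarrow> u \<in> set_pmf (q w) \<Longrightarrow> A w u \<Longrightarrow> pmf (ch w u) v \<le> T1 * Qv"
    and h2: "\<And>w u. w \<in> set_pmf p \<Longrightarrow> u \<in> set_pmf (q w) \<Longrightarrow> A w u \<Longrightarrow>
               pmf (bind_pmf (q w) (ch w)) v \<le> T2 * Qv"
    and h3: "\<And>w u. w \<in> set_pmf p \<Longrightarrow> u \<in> set_pmf (q w) \<Longrightarrow> A w u \<Longrightarrow> pmf p w \<le> \<beta>"
  defines "h \<equiv> \<lambda>w u. if A w u then pmf (ch w u) v else 0"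
  defines "m \<equiv> \<E> p (\<lambda>w. \<E> (q w) (h w))"
  shows "\<E> p (\<lambda>w. \<E> (q w) (\<lambda>u. (h w u)\<^sup>2)) \<le> (T1 * Qv) * m"
    and "\<E> p (\<lambda>w. (\<E> (q w) (h w))\<^sup>2) \<le> (T2 * Qv) * m"
    and "\<E> p (\<lambda>w. pmf p w * \<E> (q w) (\<lambda>u. (h w u)\<^sup>2)) \<le> (\<beta> * T1 * Qv) * m"
proof -
  have hnn: "0 \<le> h w u" for w u by (simp add: h_def)
  have vanish: "\<E> (q w) (h w) = 0" "\<E> (q w) (\<lambda>u. (h w u)\<^sup>2) = 0"
    if "\<not> (\<exists>u\<in>set_pmf (q w). A w u)" for w
    using that by (auto simp: AE_measure_pmf_iff h_def intro!: integral_eq_zero_AE)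
  show a: "\<E> p (\<lambda>w. \<E> (q w) (\<lambda>u. (h w u)\<^sup>2)) \<le> (T1 * Qv) * m"
  proof -
    have "\<E> p (\<lambda>w. \<E> (q w) (\<lambda>u. (h w u)\<^sup>2)) \<le> \<E> p (\<lambda>w. \<E> (q w) (\<lambda>u. (T1 * Qv) * h w u))"
    proof (intro expectation_pmf_mono[OF finp] expectation_pmf_mono[OF finq])
      fix w u assume "w \<in> set_pmf p" "u \<in> set_pmf (q w)"
      then show "(h w u)\<^sup>2 \<le> (T1 * Qv) * h w u"
        using h1 by (auto simp: h_def power2_eq_square intro: mult_right_mono)
    qed
    then show ?thesis by (simp add: m_def)
  qed
  show "\<E> p (\<lambda>w. (\<E> (q w) (h w))\<^sup>2) \<le> (T2 * Qv) * m"
  proof -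
    have "\<E> p (\<lambda>w. (\<E> (q w) (h w))\<^sup>2) \<le> \<E> p (\<lambda>w. (T2 * Qv) * \<E> (q w) (h w))"
    proof (intro expectation_pmf_mono[OF finp])
      fix w assume w: "w \<in> set_pmf p"
      have gnn: "0 \<le> \<E> (q w) (h w)" by (intro expectation_pmf_nonneg hnn)
      show "(\<E> (q w) (h w))\<^sup>2 \<le> (T2 * Qv) * \<E> (q w) (h w)"
      proof (cases "\<exists>u\<in>set_pmf (q w). A w u")
        case True
        then obtain u where u: "u \<in> set_pmf (q w)" "A w u" by blast
        have "\<E> (q w) (h w) \<le> \<E> (q w) (\<lambda>u. pmf (ch w u) v)"
          by (intro expectation_pmf_mono[OF finq]) (simp add: h_def)
        also have "\<dots> = pmf (bind_pmf (q w) (ch w)) v" by (simp add: pmf_bind)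
        also have "\<dots> \<le> T2 * Qv" by (rule h2[OF w u])
        finally show ?thesis using gnn by (simp add: power2_eq_square mult_right_mono)
      qed (simp add: vanish)
    qed
    then show ?thesis by (simp add: m_def)
  qed
  have "\<E> p (\<lambda>w. pmf p w * \<E> (q w) (\<lambda>u. (h w u)\<^sup>2)) \<le> \<E> p (\<lambda>w. \<beta> * \<E> (q w) (\<lambda>u. (h w u)\<^sup>2))"
  proof (intro expectation_pmf_mono[OF finp])
    fix w assume w: "w \<in> set_pmf p"
    have "0 \<le> \<E> (q w) (\<lambda>u. (h w u)\<^sup>2)" by (intro expectation_pmf_nonneg) auto
    then show "pmf p w * \<E> (q w) (\<lambda>u. (h w u)\<^sup>2) \<le> \<beta> * \<E> (q w) (\<lambda>u. (h w u)\<^sup>2)"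
      using h3[OF w] vanish[of w] by (cases "\<exists>u\<in>set_pmf (q w). A w u") (auto intro: mult_right_mono)
  qed
  also have "\<dots> \<le> \<beta> * ((T1 * Qv) * m)"
    by (simp add: mult_left_mono[OF a T(2)])
  finally show "\<E> p (\<lambda>w. pmf p w * \<E> (q w) (\<lambda>u. (h w u)\<^sup>2)) \<le> (\<beta> * T1 * Qv) * m"
    by (simp add: mult.assoc)
qed

lemma typical_part_deviation_le:
  fixes T1 T2 \<beta> :: real and v :: 'c
  assumes S: "finite S" "set_pmf p \<subseteq> S" and finq: "\<And>w. finite (set_pmf (q w))"
    and N: "N1 > 0" "N2 > 0" and T: "0 \<le> T1" "0 \<le> \<beta>"
    and h1: "\<And>w u. w \<in> set_pmf p \<Longrightarrow> u \<in> set_pmf (q w) \<Longrightarrow> A w u \<Longrightarrow> pmf (ch w u) v \<le> T1 * Qv"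
    and h2: "\<And>w u. w \<in> set_pmf p \<Longrightarrow> u \<in> set_pmf (q w) \<Longrightarrow> A w u \<Longrightarrow>
               pmf (bind_pmf (q w) (ch w)) v \<le> T2 * Qv"
    and h3: "\<And>w u. w \<in> set_pmf p \<Longrightarrow> u \<in> set_pmf (q w) \<Longrightarrow> A w u \<Longrightarrow> pmf p w \<le> \<beta>"
  defines "h \<equiv> \<lambda>w u. if A w u then pmf (ch w u) v else 0"
  defines "m \<equiv> \<E> p (\<lambda>w. \<E> (q w) (h w))"
  shows "\<E> (pair_pmf (outer_codebook N1 p) (inner_codebook S N2 q))
      (\<lambda>(B1, B2). \<bar>superposition_sum N1 N2 h B1 B2 / (real N1 * real N2) - m\<bar>)
    \<le> sqrt ((T1 / (real N1 * real N2) + T2 / real N1 + \<beta> * T1 / real N2) * (Qv * m))"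
proof -
  have finp: "finite (set_pmf p)" using S finite_subset by blast
  have "\<E> p (\<lambda>w. \<E> (q w) (\<lambda>u. (h w u)\<^sup>2)) \<le> (T1 * Qv) * m"
      and "\<E> p (\<lambda>w. (\<E> (q w) (h w))\<^sup>2) \<le> (T2 * Qv) * m"
      and "\<E> p (\<lambda>w. pmf p w * \<E> (q w) (\<lambda>u. (h w u)\<^sup>2)) \<le> (\<beta> * T1 * Qv) * m"
    unfolding h_def m_def
    using typical_likelihood_moments_le[where A = A and ch = ch and q = q and v = v and Qv = Qv,
        OF finp finq T] h1 h2 h3 by blast+
  then have "\<E> (pair_pmf (outer_codebook N1 p) (inner_codebook S N2 q))
      (\<lambda>(B1, B2). \<bar>superposition_sum N1 N2 h B1 B2 / (real N1 * real N2) - m\<bar>)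
    \<le> sqrt ((T1 * Qv / (real N1 * real N2) + T2 * Qv / real N1 + \<beta> * T1 * Qv / real N2) * m)"
    by (intro superposition_average_deviation_le[OF S finq _ N meta_eq_to_obj_eq[OF m_def]])
      (simp_all add: h_def)
  also have "\<dots> = sqrt ((T1 / (real N1 * real N2) + T2 / real N1 + \<beta> * T1 / real N2) * (Qv * m))"
    by (simp add: field_simps)
  finally show ?thesis .
qed

lemma sum_sqrt_mult_le:
  fixes a b :: "'i \<Rightarrow> real"
  assumes "\<And>i. i \<in> I \<Longrightarrow> 0 \<le> a i" "\<And>i. i \<in> I \<Longrightarrow> 0 \<le> b i"
  shows "(\<Sum>i\<in>I. sqrt (a i * b i)) \<le> sqrt (\<Sum>i\<in>I. a i) * sqrt (\<Sum>i\<in>I. b i)"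
proof -
  have sa: "0 \<le> sum a I" and sb: "0 \<le> sum b I" using assms by (auto intro: sum_nonneg)
  have "(\<Sum>i\<in>I. sqrt (a i) * sqrt (b i))\<^sup>2 \<le> (\<Sum>i\<in>I. (sqrt (a i))\<^sup>2) * (\<Sum>i\<in>I. (sqrt (b i))\<^sup>2)"
    by (rule Cauchy_Schwarz_ineq_sum)
  also have "\<dots> = (sqrt (\<Sum>i\<in>I. a i) * sqrt (\<Sum>i\<in>I. b i))\<^sup>2"
    using assms sa sb by (simp add: power_mult_distrib)
  finally have "(\<Sum>i\<in>I. sqrt (a i) * sqrt (b i)) \<le> sqrt (\<Sum>i\<in>I. a i) * sqrt (\<Sum>i\<in>I. b i)"
    by (rule power2_le_imp_le) (use sa sb in auto)
  then show ?thesis by (simp add: real_sqrt_mult)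
qed

lemma sum_sqrt_pmf_mult_le:
  assumes S: "finite S" "set_pmf Q \<subseteq> S" and K: "0 \<le> K"
    and m: "\<And>v. 0 \<le> m v" "\<And>v. m v \<le> pmf Q v"
  shows "(\<Sum>v\<in>S. sqrt (K * pmf Q v * m v)) \<le> sqrt K"
proof -
  have Q1: "(\<Sum>v\<in>S. pmf Q v) = 1" by (rule sum_pmf_eq_1[OF S])
  have "(\<Sum>v\<in>S. sqrt (K * pmf Q v * m v)) \<le> sqrt (\<Sum>v\<in>S. K * pmf Q v) * sqrt (\<Sum>v\<in>S. m v)"
    using sum_sqrt_mult_le[of S "\<lambda>v. K * pmf Q v" m] K m by (simp add: mult.assoc)
  also have "(\<Sum>v\<in>S. K * pmf Q v) = K" by (simp add: sum_distrib_left[symmetric] Q1)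
  also have "(\<Sum>v\<in>S. m v) \<le> 1" using sum_mono[of S m "pmf Q"] m Q1 by simp
  finally show ?thesis using K by (simp add: mult_left_mono)
qed

text \<open>One-shot soft covering: split the likelihood into a typical part, controlled by the second
  moment bound, and an atypical part, whose contribution is at most twice its mean.\<close>

lemma soft_covering_one_shot:
  fixes p :: "'a pmf" and q :: "'a \<Rightarrow> 'b pmf" and ch :: "'a \<Rightarrow> 'b \<Rightarrow> 'c pmf"
    and A :: "'a \<Rightarrow> 'b \<Rightarrow> 'c \<Rightarrow> bool" and T1 T2 \<beta> :: real
  assumes S: "finite S" "set_pmf p \<subseteq> S"
    and finq: "\<And>w. finite (set_pmf (q w))"
    and Sc: "finite Sc" "\<And>w u. set_pmf (ch w u) \<subseteq> Sc"
    and N: "N1 > 0" "N2 > 0"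
    and T: "0 \<le> T1" "0 \<le> T2" "0 \<le> \<beta>"
    and Q_def: "Q = bind_pmf p (\<lambda>w. bind_pmf (q w) (ch w))"
    and h1: "\<And>w u v. w \<in> set_pmf p \<Longrightarrow> u \<in> set_pmf (q w) \<Longrightarrow> A w u v \<Longrightarrow>
               pmf (ch w u) v \<le> T1 * pmf Q v"
    and h2: "\<And>w u v. w \<in> set_pmf p \<Longrightarrow> u \<in> set_pmf (q w) \<Longrightarrow> A w u v \<Longrightarrow>
               pmf (bind_pmf (q w) (ch w)) v \<le> T2 * pmf Q v"
    and h3: "\<And>w u v. w \<in> set_pmf p \<Longrightarrow> u \<in> set_pmf (q w) \<Longrightarrow> A w u v \<Longrightarrow> pmf p w \<le> \<beta>"
  shows "\<E> (pair_pmf (outer_codebook N1 p) (inner_codebook S N2 q))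
      (\<lambda>(B1, B2). (1/2) * (\<Sum>v\<in>Sc.
         \<bar>superposition_sum N1 N2 (\<lambda>w u. pmf (ch w u) v) B1 B2 / (real N1 * real N2) - pmf Q v\<bar>))
    \<le> \<E> p (\<lambda>w. \<E> (q w) (\<lambda>u. \<E> (ch w u) (\<lambda>v. if A w u v then 0 else 1)))
       + (1/2) * sqrt (T1 / (real N1 * real N2) + T2 / real N1 + \<beta> * T1 / real N2)"
proof -
  let ?M = "pair_pmf (outer_codebook N1 p) (inner_codebook S N2 q)" and ?N = "real N1 * real N2"
  define K where "K = T1 / ?N + T2 / real N1 + \<beta> * T1 / real N2"
  define h where "h = (\<lambda>v w u. if A w u v then pmf (ch w u) v else 0)"
  define g where "g = (\<lambda>v w u. if A w u v then 0 else pmf (ch w u) v)"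
  define m where "m = (\<lambda>v. \<E> p (\<lambda>w. \<E> (q w) (h v w)))"
  define m' where "m' = (\<lambda>v. \<E> p (\<lambda>w. \<E> (q w) (g v w)))"
  define X where "X = (\<lambda>v (B1, B2). \<bar>superposition_sum N1 N2 (h v) B1 B2 / ?N - m v\<bar>)"
  define Y where "Y = (\<lambda>v (B1, B2). superposition_sum N1 N2 (g v) B1 B2 / ?N)"
  have finp: "finite (set_pmf p)" using S finite_subset by blast
  have finM1: "finite (set_pmf (outer_codebook N1 p))" using finp by (rule finite_set_outer_codebook)
  have finM2: "finite (set_pmf (inner_codebook S N2 q))" using S finq by (intro finite_set_inner_codebook)
  have finM: "finite (set_pmf ?M)" using finM1 finM2 by simp
  have hnn: "0 \<le> h v w u" and gnn: "0 \<le> g v w u" for v w u by (simp_all add: h_def g_def)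
  have mnn: "0 \<le> m v" and m'nn: "0 \<le> m' v" for v
    unfolding m_def m'_def by (auto intro!: expectation_pmf_nonneg hnn gnn)
  have Kn: "0 \<le> K" unfolding K_def using T by auto
  have Qv: "pmf Q v = m v + m' v" for v
  proof -
    have "pmf Q v = \<E> p (\<lambda>w. \<E> (q w) (\<lambda>u. h v w u + g v w u))"
      by (auto simp: Q_def pmf_bind h_def g_def intro!: Bochner_Integration.integral_cong)
    then show ?thesis
      by (simp add: m_def m'_def expectation_pmf_add[OF finq] expectation_pmf_add[OF finp]
          cong: Bochner_Integration.integral_cong)
  qed
  have typical: "\<E> ?M (X v) \<le> sqrt (K * pmf Q v * m v)" for v
    using typical_part_deviation_le[where A = "\<lambda>w u. A w u v" and ch = ch and v = v
        and q = q and Qv = "pmf Q v", OF S finq N T(1,3) h1 h2 h3]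
    by (simp add: X_def m_def h_def K_def mult.assoc)
  have atypical: "\<E> ?M (Y v) = m' v" for v
  proof -
    have "\<E> ?M (Y v) = \<E> (outer_codebook N1 p)
        (\<lambda>B1. \<E> (inner_codebook S N2 q) (superposition_sum N1 N2 (g v) B1)) / ?N"
      unfolding Y_def by (simp add: expectation_pair_pmf[OF finM1 finM2])
    then show ?thesis
      using N by (simp add: superposition_sum_mean[OF S finq] m'_def)
  qed
  have split: "\<bar>superposition_sum N1 N2 (\<lambda>w u. pmf (ch w u) v) B1 B2 / ?N - pmf Q v\<bar>
      \<le> X v (B1, B2) + Y v (B1, B2) + m' v" for v B1 B2
  proof -
    have eq: "superposition_sum N1 N2 (\<lambda>w u. pmf (ch w u) v) B1 B2 =
        superposition_sum N1 N2 (h v) B1 B2 + superposition_sum N1 N2 (g v) B1 B2"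
      unfolding superposition_sum_def sum.distrib[symmetric]
      by (intro sum.cong refl) (simp add: h_def g_def)
    have "0 \<le> superposition_sum N1 N2 (g v) B1 B2 / ?N"
      unfolding superposition_sum_def by (intro divide_nonneg_nonneg sum_nonneg gnn) simp
    then show ?thesis
      using m'nn[of v] unfolding X_def Y_def Qv eq add_divide_distrib by simp
  qed
  have "\<E> ?M (\<lambda>(B1, B2). (1/2) * (\<Sum>v\<in>Sc.
      \<bar>superposition_sum N1 N2 (\<lambda>w u. pmf (ch w u) v) B1 B2 / ?N - pmf Q v\<bar>))
    \<le> \<E> ?M (\<lambda>x. (1/2) * (\<Sum>v\<in>Sc. X v x + Y v x + m' v))"
    using split by (intro expectation_pmf_mono[OF finM]) (auto intro!: sum_mono)
  also have "\<dots> = (1/2) * (\<Sum>v\<in>Sc. \<E> ?M (X v) + m' v + m' v)"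
    by (simp add: expectation_pmf_sum[OF finM] expectation_pmf_add[OF finM] atypical)
  also have "\<dots> \<le> (1/2) * (\<Sum>v\<in>Sc. sqrt (K * pmf Q v * m v) + 2 * m' v)"
    by (intro mult_left_mono sum_mono) (auto intro: typical)
  also have "\<dots> = (1/2) * (\<Sum>v\<in>Sc. sqrt (K * pmf Q v * m v)) + (\<Sum>v\<in>Sc. m' v)"
    by (simp add: sum.distrib sum_distrib_left algebra_simps)
  also have "(\<Sum>v\<in>Sc. sqrt (K * pmf Q v * m v)) \<le> sqrt K"
  proof (rule sum_sqrt_pmf_mult_le[OF Sc(1) _ Kn mnn])
    show "set_pmf Q \<subseteq> Sc" using Sc(2) by (auto simp: Q_def)
  qed (simp add: Qv m'nn)
  also have "(\<Sum>v\<in>Sc. m' v) = \<E> p (\<lambda>w. \<E> (q w) (\<lambda>u. \<E> (ch w u) (\<lambda>v. if A w u v then 0 else 1)))"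
    unfolding m'_def
    by (auto simp: expectation_pmf_sum[OF finp, symmetric] expectation_pmf_sum[OF finq, symmetric]
          expectation_pmf_eq_sum[OF Sc] g_def intro!: Bochner_Integration.integral_cong sum.cong)
  finally show ?thesis by (simp add: K_def)
qed

section \<open>Information quantities as expected log-likelihood ratios\<close>

definition info_density_WU :: "'w pmf \<Rightarrow> ('w \<Rightarrow> 'u pmf) \<Rightarrow> ('w \<Rightarrow> 'u \<Rightarrow> 'v pmf) \<Rightarrow> 'w \<times> 'u \<times> 'v \<Rightarrow> real"
  where "info_density_WU PW PUW PV = (\<lambda>(w, u, v). log 2 (pmf (PV w u) v / pmf (marg_V PW PUW PV) v))"

definition info_density_W :: "'w pmf \<Rightarrow> ('w \<Rightarrow> 'u pmf) \<Rightarrow> ('w \<Rightarrow> 'u \<Rightarrow> 'v pmf) \<Rightarrow> 'w \<times> 'u \<times> 'v \<Rightarrow> real"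
  where "info_density_W PW PUW PV =
    (\<lambda>(w, u, v). log 2 (pmf (bind_pmf (PUW w) (PV w)) v / pmf (marg_V PW PUW PV) v))"

definition log_pmf_W :: "'w pmf \<Rightarrow> 'w \<times> 'u \<times> 'v \<Rightarrow> real"
  where "log_pmf_W PW = (\<lambda>(w, u, v). log 2 (pmf PW w))"

lemma pmf_bind_map_Pair:
  "pmf (bind_pmf M (\<lambda>x. map_pmf (Pair x) (K x))) (a, b) = pmf M a * pmf (K a) b"
proof -
  have "pmf (map_pmf (Pair x) (K x)) (a, b) = indicator {a} x * pmf (K a) b" for x
  proof (cases "x = a")
    case True
    then show ?thesis using pmf_map_inj'[of "Pair a" "K a" b] by (simp add: inj_on_def)
  next
    case False
    then have "(a, b) \<notin> set_pmf (map_pmf (Pair x) (K x))" by auto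
    then show ?thesis using False by (simp add: set_pmf_eq)
  qed
  then show ?thesis by (simp add: pmf_bind measure_pmf_single)
qed

lemma sum_UNIV_prod:
  "(\<Sum>x\<in>(UNIV::('a::finite \<times> 'b::finite) set). f x) = (\<Sum>a\<in>UNIV. \<Sum>b\<in>UNIV. f (a, b))"
  by (simp add: UNIV_Times_UNIV[symmetric] sum.cartesian_product del: UNIV_Times_UNIV)

lemma sum_pmf_UNIV: "(\<Sum>x\<in>(UNIV::'a::finite set). pmf p x) = 1"
  by (rule sum_pmf_eq_1) auto

lemma pmf_joint_WUV:
  "pmf (joint_WUV PW PUW PV) (w, u, v) = pmf PW w * pmf (PUW w) u * pmf (PV w u) v"
proof -
  have "joint_WUV PW PUW PV =
      bind_pmf PW (\<lambda>w. map_pmf (Pair w) (bind_pmf (PUW w) (\<lambda>u. map_pmf (Pair u) (PV w u))))"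
    unfolding joint_WUV_def by (simp add: map_pmf_def bind_assoc_pmf bind_return_pmf)
  then show ?thesis by (simp add: pmf_bind_map_Pair)
qed

lemma marg_V_eq_bind: "marg_V PW PUW PV = bind_pmf PW (\<lambda>w. bind_pmf (PUW w) (PV w))"
  unfolding marg_V_def joint_WUV_def
  by (simp add: map_pmf_def bind_assoc_pmf bind_return_pmf bind_return_pmf')

lemma pmf_bind_finite:
  fixes M :: "'a::finite pmf"
  shows "pmf (bind_pmf M N) x = (\<Sum>a\<in>UNIV. pmf M a * pmf (N a) x)"
  by (simp add: pmf_bind expectation_pmf_eq_sum[of UNIV])

lemma pmf_marg_V_ge_mixture:
  fixes PW :: "'w::finite pmf" and PUW :: "'w \<Rightarrow> 'u::finite pmf"
  shows "pmf PW w * pmf (bind_pmf (PUW w) (PV w)) v \<le> pmf (marg_V PW PUW PV) v"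
  unfolding marg_V_eq_bind pmf_bind_finite[of PW] by (rule member_le_sum) auto

lemma pmf_marg_V_ge_joint:
  fixes PW :: "'w::finite pmf" and PUW :: "'w \<Rightarrow> 'u::finite pmf"
  shows "pmf PW w * pmf (PUW w) u * pmf (PV w u) v \<le> pmf (marg_V PW PUW PV) v"
proof -
  have "pmf (PUW w) u * pmf (PV w u) v \<le> pmf (bind_pmf (PUW w) (PV w)) v"
    unfolding pmf_bind_finite[of "PUW w"]
    by (rule member_le_sum[where f = "\<lambda>u. pmf (PUW w) u * pmf (PV w u) v"]) auto
  then have "pmf PW w * pmf (PUW w) u * pmf (PV w u) v \<le> pmf PW w * pmf (bind_pmf (PUW w) (PV w)) v"
    by (simp add: mult.assoc mult_left_mono)
  then show ?thesis using pmf_marg_V_ge_mixture[of PW w PUW PV v] by linarith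
qed

lemma expectation_joint_WUV:
  fixes PW :: "'w::finite pmf" and PUW :: "'w \<Rightarrow> 'u::finite pmf" and PV :: "'w \<Rightarrow> 'u \<Rightarrow> 'v::finite pmf"
  shows "\<E> (joint_WUV PW PUW PV) f =
    (\<Sum>w\<in>UNIV. \<Sum>u\<in>UNIV. \<Sum>v\<in>UNIV. pmf PW w * pmf (PUW w) u * pmf (PV w u) v * f (w, u, v))"
  by (simp add: expectation_pmf_eq_sum[of UNIV] sum_UNIV_prod pmf_joint_WUV)

text \<open>Summands with vanishing joint probability contribute nothing to either side; on the rest
  the marginals in the definition of mutual information cancel against the joint law.\<close>

lemma mutual_info_WU_V_eq_expectation:
  fixes PW :: "'w::finite pmf" and PUW :: "'w \<Rightarrow> 'u::finite pmf" and PV :: "'w \<Rightarrow> 'u \<Rightarrow> 'v::finite pmf"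
  shows "mutual_info_bits (map_pmf (\<lambda>(w, u, v). ((w, u), v)) (joint_WUV PW PUW PV)) =
     \<E> (joint_WUV PW PUW PV) (info_density_WU PW PUW PV)"
proof -
  let ?P = "map_pmf (\<lambda>(w, u, v). ((w, u), v)) (joint_WUV PW PUW PV)"
  have pmf_P: "pmf ?P ((w, u), v) = pmf PW w * pmf (PUW w) u * pmf (PV w u) v" for w u v
    using pmf_map_inj'[of "\<lambda>(w, u, v). ((w, u), v)" "joint_WUV PW PUW PV" "(w, u, v)"]
    by (simp add: inj_on_def pmf_joint_WUV)
  have fst_P: "map_pmf fst ?P = bind_pmf PW (\<lambda>w. map_pmf (Pair w) (PUW w))"
    unfolding joint_WUV_def by (simp add: map_pmf_def bind_assoc_pmf bind_return_pmf bind_return_pmf')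
  have snd_P: "map_pmf snd ?P = marg_V PW PUW PV"
    unfolding marg_V_def pmf.map_comp by (intro pmf.map_cong) auto
  show ?thesis
    unfolding mutual_info_bits_def expectation_joint_WUV info_density_WU_def
    by (auto simp: sum_UNIV_prod pmf_P fst_P snd_P pmf_bind_map_Pair intro!: sum.cong)
qed

lemma mutual_info_W_V_eq_expectation:
  fixes PW :: "'w::finite pmf" and PUW :: "'w \<Rightarrow> 'u::finite pmf" and PV :: "'w \<Rightarrow> 'u \<Rightarrow> 'v::finite pmf"
  shows "mutual_info_bits (map_pmf (\<lambda>(w, u, v). (w, v)) (joint_WUV PW PUW PV)) =
     \<E> (joint_WUV PW PUW PV) (info_density_W PW PUW PV)"
proof -
  let ?P = "map_pmf (\<lambda>(w, u, v). (w, v)) (joint_WUV PW PUW PV)"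
  let ?C = "\<lambda>w. bind_pmf (PUW w) (PV w)" and ?Q = "marg_V PW PUW PV"
  have "?P = bind_pmf PW (\<lambda>w. map_pmf (Pair w) (?C w))"
    unfolding joint_WUV_def by (simp add: map_pmf_def bind_assoc_pmf bind_return_pmf)
  then have pmf_P: "pmf ?P (w, v) = pmf PW w * pmf (?C w) v" for w v
    by (simp add: pmf_bind_map_Pair)
  have fst_P: "map_pmf fst ?P = PW"
    unfolding joint_WUV_def by (simp add: map_pmf_def bind_assoc_pmf bind_return_pmf bind_return_pmf')
  have snd_P: "map_pmf snd ?P = ?Q"
    unfolding marg_V_def pmf.map_comp by (intro pmf.map_cong) auto
  have "mutual_info_bits ?P =
      (\<Sum>w\<in>UNIV. \<Sum>v\<in>UNIV. pmf PW w * pmf (?C w) v * log 2 (pmf (?C w) v / pmf ?Q v))"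
    unfolding mutual_info_bits_def
    by (auto simp: sum_UNIV_prod pmf_P fst_P snd_P intro!: sum.cong)
  also have "\<dots> = (\<Sum>w\<in>UNIV. \<Sum>v\<in>UNIV. \<Sum>u\<in>UNIV.
      pmf PW w * pmf (PUW w) u * pmf (PV w u) v * log 2 (pmf (?C w) v / pmf ?Q v))"
    by (intro sum.cong refl)
      (simp add: pmf_bind_finite[of "PUW _"] sum_distrib_left sum_distrib_right mult.assoc)
  also have "\<dots> = \<E> (joint_WUV PW PUW PV) (info_density_W PW PUW PV)"
    unfolding expectation_joint_WUV info_density_W_def prod.case by (intro sum.cong refl sum.swap)
  finally show ?thesis .
qed

lemma neg_entropy_eq_expectation:
  fixes PW :: "'w::finite pmf" and PUW :: "'w \<Rightarrow> 'u::finite pmf" and PV :: "'w \<Rightarrow> 'u \<Rightarrow> 'v::finite pmf"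
  shows "- entropy_bits PW = \<E> (joint_WUV PW PUW PV) (log_pmf_W PW)"
proof -
  have "\<E> (joint_WUV PW PUW PV) (log_pmf_W PW) =
      (\<Sum>w\<in>UNIV. pmf PW w * log 2 (pmf PW w) * (\<Sum>u\<in>UNIV. pmf (PUW w) u * (\<Sum>v\<in>UNIV. pmf (PV w u) v)))"
    by (simp add: expectation_joint_WUV log_pmf_W_def sum_distrib_left sum_distrib_right mult_ac)
  then show ?thesis by (simp add: sum_pmf_UNIV entropy_bits_def)
qed

section \<open>Memoryless sequences\<close>

lemma finite_seqs: "finite (seqs n :: (nat \<Rightarrow> 'a::finite) set)"
  unfolding seqs_def by (rule finite_PiE) auto

lemma set_prod_seq_subset: "set_pmf (prod_seq n f) \<subseteq> seqs n"
  unfolding prod_seq_def seqs_def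
  by (subst set_Pi_pmf) (auto simp: PiE_dflt_def PiE_def extensional_def)

lemma prod_seq_entry_in_set: "x \<in> set_pmf (prod_seq n f) \<Longrightarrow> t < n \<Longrightarrow> x t \<in> set_pmf (f t)"
  unfolding prod_seq_def by (subst (asm) set_Pi_pmf) (auto simp: PiE_dflt_def)

lemma finite_set_prod_seq: "finite (set_pmf (prod_seq n (f :: nat \<Rightarrow> 'a::finite pmf)))"
  using set_prod_seq_subset finite_seqs finite_subset by blast

lemma pmf_prod_seq:
  "pmf (prod_seq n f) x = (if x \<in> seqs n then (\<Prod>t<n. pmf (f t) (x t)) else 0)"
  unfolding prod_seq_def seqs_def by (subst pmf_Pi) (auto simp: PiE_def extensional_def)

lemma prod_seq_bind:
  "prod_seq n (\<lambda>t. bind_pmf (p t) (f t)) = bind_pmf (prod_seq n p) (\<lambda>x. prod_seq n (\<lambda>t. f t (x t)))"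
  unfolding prod_seq_def by (simp add: Pi_pmf_bind[where d' = undefined])

lemma prod_seq_marg_V:
  "prod_seq n (\<lambda>_. marg_V PW PUW PV) = bind_pmf (prod_seq n (\<lambda>_. PW))
     (\<lambda>w. bind_pmf (prod_seq n (\<lambda>t. PUW (w t))) (\<lambda>u. prod_seq n (\<lambda>t. PV (w t) (u t))))"
  unfolding marg_V_eq_bind by (simp add: prod_seq_bind)

definition zip_seq3 :: "nat \<Rightarrow> (nat \<Rightarrow> 'a) \<Rightarrow> (nat \<Rightarrow> 'b) \<Rightarrow> (nat \<Rightarrow> 'c) \<Rightarrow> nat \<Rightarrow> 'a \<times> 'b \<times> 'c" where
  "zip_seq3 n w u v = (\<lambda>t. if t \<in> {..<n} then (w t, u t, v t) else undefined)"

lemma Pi_pmf_joint_WUV: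
  "Pi_pmf {..<n} undefined (\<lambda>_. joint_WUV PW PUW PV) =
     bind_pmf (prod_seq n (\<lambda>_. PW)) (\<lambda>w. bind_pmf (prod_seq n (\<lambda>t. PUW (w t)))
        (\<lambda>u. map_pmf (zip_seq3 n w u) (prod_seq n (\<lambda>t. PV (w t) (u t)))))"
  unfolding prod_seq_def joint_WUV_def zip_seq3_def
  by (simp add: Pi_pmf_bind[where d' = undefined] map_pmf_def)

lemma prod_le_powr_of_sum_log_le:
  fixes x y :: "nat \<Rightarrow> real"
  assumes "\<And>t. t < n \<Longrightarrow> 0 < x t" "\<And>t. t < n \<Longrightarrow> 0 < y t"
    and "(\<Sum>t<n. log 2 (x t / y t)) \<le> c"
  shows "(\<Prod>t<n. x t) \<le> 2 powr c * (\<Prod>t<n. y t)"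
proof -
  have "(\<Prod>t<n. x t) = (\<Prod>t<n. 2 powr (log 2 (x t / y t)) * y t)"
    using assms by (intro prod.cong refl) (simp add: less_imp_neq[symmetric])
  also have "\<dots> = 2 powr (\<Sum>t<n. log 2 (x t / y t)) * (\<Prod>t<n. y t)"
    by (simp add: prod.distrib powr_sum)
  also have "\<dots> \<le> 2 powr c * (\<Prod>t<n. y t)"
    using assms by (intro mult_right_mono prod_nonneg) (auto simp: less_imp_le)
  finally show ?thesis .
qed

lemma pmf_prod_seq_le_powr:
  assumes abs_cont: "\<And>t. t < n \<Longrightarrow> 0 < pmf (f t) (v t) \<Longrightarrow> 0 < pmf (g t) (v t)"
    and log_ratio: "(\<Sum>t<n. log 2 (pmf (f t) (v t) / pmf (g t) (v t))) \<le> c"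
  shows "pmf (prod_seq n f) v \<le> 2 powr c * pmf (prod_seq n g) v"
proof (cases "v \<in> seqs n \<and> (\<forall>t<n. 0 < pmf (f t) (v t))")
  case True
  then show ?thesis
    using prod_le_powr_of_sum_log_le[OF _ _ log_ratio] abs_cont by (simp add: pmf_prod_seq)
next
  case False
  have "pmf (prod_seq n f) v = 0"
  proof (cases "v \<in> seqs n")
    case True
    with False obtain t where "t < n" "\<not> 0 < pmf (f t) (v t)" by blast
    then have "t < n" "pmf (f t) (v t) = 0" by (simp_all add: order.antisym not_less)
    then show ?thesis by (simp add: pmf_prod_seq) (auto intro!: prod_zero)
  qed (simp add: pmf_prod_seq)
  then show ?thesis by simp
qed

lemma cb_size_pos: "0 < cb_size R n"
  unfolding cb_size_def by simp

lemma pmf_induced_V: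
  "pmf (induced_V PV R1 R2 n B1 B2) v =
     superposition_sum (cb_size R1 n) (cb_size R2 n)
       (\<lambda>w u. pmf (prod_seq n (\<lambda>t. PV (w t) (u t))) v) B1 B2 / (real (cb_size R1 n) * real (cb_size R2 n))"
proof -
  have ne: "{..<cb_size R n} \<noteq> {}" for R using cb_size_pos by auto
  show ?thesis
    unfolding induced_V_def Let_def superposition_sum_def
    by (simp add: pmf_bind integral_pmf_of_set[OF ne] sum_divide_distrib mult.commute)
qed

section \<open>Chernoff bound\<close>

definition upper_tail :: "'a pmf \<Rightarrow> ('a \<Rightarrow> real) \<Rightarrow> real \<Rightarrow> nat \<Rightarrow> real" where
  "upper_tail r g a n = \<E> (Pi_pmf {..<n} undefined (\<lambda>_. r))
     (\<lambda>x. if (\<Sum>t<n. g (x t)) > real n * a then 1 else 0)"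

lemma exists_mgf_less_one:
  fixes r :: "'x::finite pmf" and g :: "'x \<Rightarrow> real"
  assumes "\<E> r g < a"
  shows "\<exists>l>0. (\<Sum>x\<in>UNIV. pmf r x * exp (l * (g x - a))) < 1"
proof -
  define \<psi> where "\<psi> = (\<lambda>l. \<Sum>x\<in>UNIV. pmf r x * exp (l * (g x - a)))"
  have "(\<psi> has_real_derivative (\<Sum>x\<in>UNIV. pmf r x * (g x - a))) (at 0)"
    unfolding \<psi>_def by (rule DERIV_sum) (auto intro!: derivative_eq_intros)
  moreover have "(\<Sum>x\<in>UNIV. pmf r x * (g x - a)) = \<E> r g - a"
    by (simp add: algebra_simps sum_subtractf sum_distrib_left[symmetric] sum_pmf_UNIV
        expectation_pmf_eq_sum[of UNIV])
  ultimately have "(\<psi> has_real_derivative \<E> r g - a) (at 0)" by simp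
  then obtain d where d: "d > 0" "\<forall>h>0. h < d \<longrightarrow> \<psi> (0 + h) < \<psi> 0"
    using DERIV_neg_dec_right assms by (metis diff_less_0_iff_less)
  have "\<psi> 0 = 1" unfolding \<psi>_def by (simp add: sum_pmf_UNIV)
  then have "\<psi> (d / 2) < 1" using d by auto
  then show ?thesis using d by (intro exI[of _ "d/2"]) (simp add: \<psi>_def)
qed

lemma chernoff_upper_tail:
  fixes r :: "'x::finite pmf" and g :: "'x \<Rightarrow> real"
  assumes "\<E> r g < a"
  shows "\<exists>\<phi>. 0 \<le> \<phi> \<and> \<phi> < 1 \<and> (\<forall>n. upper_tail r g a n \<le> \<phi> ^ n)"
proof -
  obtain l where l: "l > 0" "(\<Sum>x\<in>UNIV. pmf r x * exp (l * (g x - a))) < 1"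
    using exists_mgf_less_one[OF assms] by blast
  define \<phi> where "\<phi> = (\<Sum>x\<in>UNIV. pmf r x * exp (l * (g x - a)))"
  have "upper_tail r g a n \<le> \<phi> ^ n" for n
  proof -
    have "upper_tail r g a n
        \<le> \<E> (Pi_pmf {..<n} undefined (\<lambda>_. r)) (\<lambda>x. \<Prod>t<n. exp (l * (g (x t) - a)))"
      unfolding upper_tail_def
    proof (rule expectation_pmf_mono[OF finite_set_Pi_pmf])
      fix x
      have "(\<Prod>t<n. exp (l * (g (x t) - a))) = exp (l * ((\<Sum>t<n. g (x t)) - real n * a))"
        by (simp add: exp_sum[symmetric] sum_distrib_left[symmetric] sum_subtractf)
      then show "(if (\<Sum>t<n. g (x t)) > real n * a then 1 else 0) \<le> (\<Prod>t<n. exp (l * (g (x t) - a)))"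
        using l(1) by auto
    qed auto
    also have "\<dots> = (\<Prod>t<n. \<E> r (\<lambda>y. exp (l * (g y - a))))"
      by (rule expectation_prod_Pi_pmf) (auto intro: integrable_measure_pmf_finite)
    also have "\<dots> = \<phi> ^ n"
      by (simp add: \<phi>_def expectation_pmf_eq_sum[of UNIV] mult.commute)
    finally show ?thesis .
  qed
  moreover have "0 \<le> \<phi>" unfolding \<phi>_def by (intro sum_nonneg) auto
  ultimately show ?thesis using l(2) by (intro exI[of _ \<phi>]) (auto simp: \<phi>_def)
qed

section \<open>The n-letter bound\<close>

definition jointly_typical :: "'w pmf \<Rightarrow> ('w \<Rightarrow> 'u pmf) \<Rightarrow> ('w \<Rightarrow> 'u \<Rightarrow> 'v pmf) \<Rightarrow>
    real \<Rightarrow> real \<Rightarrow> real \<Rightarrow> nat \<Rightarrow> (nat \<Rightarrow> 'w \<times> 'u \<times> 'v) \<Rightarrow> bool" where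
  "jointly_typical PW PUW PV a1 a2 a3 n x \<longleftrightarrow>
     (\<Sum>t<n. info_density_WU PW PUW PV (x t)) \<le> real n * a1 \<and>
     (\<Sum>t<n. info_density_W PW PUW PV (x t)) \<le> real n * a2 \<and>
     (\<Sum>t<n. log_pmf_W PW (x t)) \<le> real n * a3"

lemma sum_zip_seq3: "(\<Sum>t<n. g (zip_seq3 n w u v t)) = (\<Sum>t<n. g (w t, u t, v t))"
  by (intro sum.cong refl) (simp add: zip_seq3_def)

lemma pmf_codeword_pos:
  "w \<in> set_pmf (prod_seq n (\<lambda>_. PW)) \<Longrightarrow> t < n \<Longrightarrow> 0 < pmf PW (w t)"
  "u \<in> set_pmf (prod_seq n (\<lambda>t. PUW (w t))) \<Longrightarrow> t < n \<Longrightarrow> 0 < pmf (PUW (w t)) (u t)"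
  by (auto dest: prod_seq_entry_in_set simp: pmf_positive)

context
  fixes PW :: "'w::finite pmf" and PUW :: "'w \<Rightarrow> 'u::finite pmf" and PV :: "'w \<Rightarrow> 'u \<Rightarrow> 'v::finite pmf"
    and a1 a2 a3 :: real and n :: nat and w :: "nat \<Rightarrow> 'w" and u :: "nat \<Rightarrow> 'u" and v :: "nat \<Rightarrow> 'v"
  assumes w: "w \<in> set_pmf (prod_seq n (\<lambda>_. PW))"
    and u: "u \<in> set_pmf (prod_seq n (\<lambda>t. PUW (w t)))"
    and typical: "jointly_typical PW PUW PV a1 a2 a3 n (zip_seq3 n w u v)"
begin

lemma typical_channel_pmf_le:
  "pmf (prod_seq n (\<lambda>t. PV (w t) (u t))) v \<le> 2 powr (real n * a1) * pmf (prod_seq n (\<lambda>_. marg_V PW PUW PV)) v"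
proof (rule pmf_prod_seq_le_powr)
  fix t assume t: "t < n" and "0 < pmf (PV (w t) (u t)) (v t)"
  then have "0 < pmf PW (w t) * pmf (PUW (w t)) (u t) * pmf (PV (w t) (u t)) (v t)"
    using pmf_codeword_pos(1)[OF w t] pmf_codeword_pos(2)[where PUW = PUW and w = w, OF u t] by simp
  then show "0 < pmf (marg_V PW PUW PV) (v t)"
    using pmf_marg_V_ge_joint by (rule order.strict_trans2)
qed (use typical in \<open>simp add: jointly_typical_def sum_zip_seq3 info_density_WU_def\<close>)

lemma typical_mixture_pmf_le:
  "pmf (bind_pmf (prod_seq n (\<lambda>t. PUW (w t))) (\<lambda>u. prod_seq n (\<lambda>t. PV (w t) (u t)))) v
     \<le> 2 powr (real n * a2) * pmf (prod_seq n (\<lambda>_. marg_V PW PUW PV)) v"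
  unfolding prod_seq_bind[where f = "\<lambda>t. PV (w t)", symmetric]
proof (rule pmf_prod_seq_le_powr)
  fix t assume t: "t < n" and "0 < pmf (bind_pmf (PUW (w t)) (PV (w t))) (v t)"
  then have "0 < pmf PW (w t) * pmf (bind_pmf (PUW (w t)) (PV (w t))) (v t)"
    using pmf_codeword_pos(1)[OF w t] by simp
  then show "0 < pmf (marg_V PW PUW PV) (v t)"
    using pmf_marg_V_ge_mixture by (rule order.strict_trans2)
qed (use typical in \<open>simp add: jointly_typical_def sum_zip_seq3 info_density_W_def\<close>)

lemma typical_codeword_pmf_le: "pmf (prod_seq n (\<lambda>_. PW)) w \<le> 2 powr (real n * a3)"
proof -
  have "(\<Prod>t<n. pmf PW (w t)) \<le> 2 powr (real n * a3) * (\<Prod>t<n. 1)"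
    using typical pmf_codeword_pos(1)[OF w]
    by (intro prod_le_powr_of_sum_log_le)
      (simp_all add: jointly_typical_def sum_zip_seq3 log_pmf_W_def)
  then show ?thesis
    using set_prod_seq_subset w by (auto simp: pmf_prod_seq)
qed

end

lemma atypical_prob_le_upper_tails:
  fixes PW :: "'w::finite pmf" and PUW :: "'w \<Rightarrow> 'u::finite pmf" and PV :: "'w \<Rightarrow> 'u \<Rightarrow> 'v::finite pmf"
  defines "J \<equiv> joint_WUV PW PUW PV"
  shows "\<E> (prod_seq n (\<lambda>_. PW)) (\<lambda>w. \<E> (prod_seq n (\<lambda>t. PUW (w t))) (\<lambda>u.
      \<E> (prod_seq n (\<lambda>t. PV (w t) (u t)))
        (\<lambda>v. if jointly_typical PW PUW PV a1 a2 a3 n (zip_seq3 n w u v) then 0 else 1)))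
    \<le> upper_tail J (info_density_WU PW PUW PV) a1 n + upper_tail J (info_density_W PW PUW PV) a2 n
      + upper_tail J (log_pmf_W PW) a3 n"
proof -
  let ?Jn = "Pi_pmf {..<n} undefined (\<lambda>_. J)"
  have fin: "finite (set_pmf ?Jn)" by (rule finite_set_Pi_pmf) auto
  let ?A = "\<lambda>x. if jointly_typical PW PUW PV a1 a2 a3 n x then 0 else 1 :: real"
  have "\<E> ?Jn ?A = \<E> (prod_seq n (\<lambda>_. PW)) (\<lambda>w. \<E> (prod_seq n (\<lambda>t. PUW (w t))
      \<bind> (\<lambda>u. map_pmf (zip_seq3 n w u) (prod_seq n (\<lambda>t. PV (w t) (u t))))) ?A)"
    unfolding J_def Pi_pmf_joint_WUV
    by (rule expectation_bind_pmf[OF finite_seqs set_prod_seq_subset]) (simp add: finite_set_prod_seq)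
  also have "\<dots> = \<E> (prod_seq n (\<lambda>_. PW)) (\<lambda>w. \<E> (prod_seq n (\<lambda>t. PUW (w t))) (\<lambda>u.
      \<E> (prod_seq n (\<lambda>t. PV (w t) (u t))) (\<lambda>v. ?A (zip_seq3 n w u v))))"
    by (intro Bochner_Integration.integral_cong refl,
        subst expectation_bind_pmf[OF finite_seqs set_prod_seq_subset]) (auto simp: finite_set_prod_seq)
  finally have "\<E> (prod_seq n (\<lambda>_. PW)) (\<lambda>w. \<E> (prod_seq n (\<lambda>t. PUW (w t))) (\<lambda>u.
      \<E> (prod_seq n (\<lambda>t. PV (w t) (u t)))
        (\<lambda>v. if jointly_typical PW PUW PV a1 a2 a3 n (zip_seq3 n w u v) then 0 else 1)))
    = \<E> ?Jn ?A" by simp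
  also have "\<dots> \<le> \<E> ?Jn (\<lambda>x.
        (if (\<Sum>t<n. info_density_WU PW PUW PV (x t)) > real n * a1 then 1 else 0)
      + (if (\<Sum>t<n. info_density_W PW PUW PV (x t)) > real n * a2 then 1 else 0)
      + (if (\<Sum>t<n. log_pmf_W PW (x t)) > real n * a3 then 1 else 0))"
    by (intro expectation_pmf_mono[OF fin]) (auto simp: jointly_typical_def)
  also have "\<dots> = upper_tail J (info_density_WU PW PUW PV) a1 n + upper_tail J (info_density_W PW PUW PV) a2 n
      + upper_tail J (log_pmf_W PW) a3 n"
    by (simp add: expectation_pmf_add[OF fin] upper_tail_def)
  finally show ?thesis .
qed

lemma expected_tv_le_upper_tails:
  fixes PW :: "'w::finite pmf" and PUW :: "'w \<Rightarrow> 'u::finite pmf" and PV :: "'w \<Rightarrow> 'u \<Rightarrow> 'v::finite pmf"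
    and R1 R2 a1 a2 a3 :: real and n :: nat
  defines "J \<equiv> joint_WUV PW PUW PV"
    and "N1 \<equiv> cb_size R1 n" and "N2 \<equiv> cb_size R2 n"
  shows "expected_tv PW PUW PV R1 R2 n \<le>
      upper_tail J (info_density_WU PW PUW PV) a1 n + upper_tail J (info_density_W PW PUW PV) a2 n
    + upper_tail J (log_pmf_W PW) a3 n
    + (1/2) * sqrt (2 powr (real n * a1) / (real N1 * real N2) + 2 powr (real n * a2) / real N1
         + 2 powr (real n * a3) * 2 powr (real n * a1) / real N2)"
proof -
  define p where "p = prod_seq n (\<lambda>_. PW)"
  define q where "q = (\<lambda>w. prod_seq n (\<lambda>t. PUW (w t)))"
  define ch where "ch = (\<lambda>w u. prod_seq n (\<lambda>t. PV (w t) (u t)))"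
  define Q where "Q = prod_seq n (\<lambda>_. marg_V PW PUW PV)"
  define A where "A = (\<lambda>w u v. jointly_typical PW PUW PV a1 a2 a3 n (zip_seq3 n w u v))"
  have "expected_tv PW PUW PV R1 R2 n =
      \<E> (pair_pmf (outer_codebook N1 p) (inner_codebook (seqs n) N2 q))
        (\<lambda>(B1, B2). (1/2) * (\<Sum>v\<in>seqs n.
          \<bar>superposition_sum N1 N2 (\<lambda>w u. pmf (ch w u) v) B1 B2 / (real N1 * real N2) - pmf Q v\<bar>))"
    unfolding expected_tv_def codebook1_dist_def codebook2_dist_def tv_seq_def
      outer_codebook_def inner_codebook_def
    by (simp add: pmf_induced_V p_def q_def ch_def Q_def N1_def N2_def)
  also have "\<dots> \<le> \<E> p (\<lambda>w. \<E> (q w) (\<lambda>u. \<E> (ch w u) (\<lambda>v. if A w u v then 0 else 1)))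
      + (1/2) * sqrt (2 powr (real n * a1) / (real N1 * real N2) + 2 powr (real n * a2) / real N1
         + 2 powr (real n * a3) * 2 powr (real n * a1) / real N2)"
  proof (rule soft_covering_one_shot[OF finite_seqs _ _ finite_seqs])
    show "Q = bind_pmf p (\<lambda>w. bind_pmf (q w) (ch w))"
      unfolding Q_def p_def q_def ch_def by (rule prod_seq_marg_V)
    show "pmf (ch w u) v \<le> 2 powr (real n * a1) * pmf Q v"
      if "w \<in> set_pmf p" "u \<in> set_pmf (q w)" "A w u v" for w u v
      using typical_channel_pmf_le that unfolding p_def q_def ch_def Q_def A_def by blast
    show "pmf (bind_pmf (q w) (ch w)) v \<le> 2 powr (real n * a2) * pmf Q v"
      if "w \<in> set_pmf p" "u \<in> set_pmf (q w)" "A w u v" for w u v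
      using typical_mixture_pmf_le that unfolding p_def q_def ch_def Q_def A_def by blast
    show "pmf p w \<le> 2 powr (real n * a3)"
      if "w \<in> set_pmf p" "u \<in> set_pmf (q w)" "A w u v" for w u v
      using typical_codeword_pmf_le that unfolding p_def q_def A_def by blast
  qed (auto simp: p_def q_def ch_def N1_def N2_def set_prod_seq_subset finite_set_prod_seq cb_size_pos)
  also have "\<E> p (\<lambda>w. \<E> (q w) (\<lambda>u. \<E> (ch w u) (\<lambda>v. if A w u v then 0 else 1))) \<le>
      upper_tail J (info_density_WU PW PUW PV) a1 n + upper_tail J (info_density_W PW PUW PV) a2 n
    + upper_tail J (log_pmf_W PW) a3 n"
    unfolding p_def q_def ch_def A_def J_def by (rule atypical_prob_le_upper_tails)
  finally show ?thesis by simp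
qed

section \<open>Rates and the exponential decay\<close>

lemma cb_size_ge: "2 powr (real n * R) \<le> real (cb_size R n)"
  unfolding cb_size_def by (rule real_nat_ceiling_ge)

lemma powr_div_le_of_rate_gap:
  assumes "2 powr (real n * R) \<le> N" "a + d \<le> R"
  shows "2 powr (real n * a) / N \<le> 2 powr (- d * real n)"
proof -
  have "0 < N" using assms(1) by (rule less_le_trans[rotated]) simp
  then have "2 powr (real n * a) / N \<le> 2 powr (real n * a) / 2 powr (real n * R)"
    using assms(1) by (intro divide_left_mono) auto
  also have "\<dots> = 2 powr (real n * (a - R))" by (simp add: powr_diff[symmetric] algebra_simps)
  also have "\<dots> \<le> 2 powr (- d * real n)"
    using mult_left_mono[of "a - R" "- d" "real n"] assms(2) by (simp add: algebra_simps)
  finally show ?thesis .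
qed

lemma codebook_rate_terms_le:
  fixes R1 R2 a1 a2 a3 \<delta> :: real and n :: nat
  assumes "a1 + \<delta> \<le> R1 + R2" "a2 + \<delta> \<le> R1" "a3 + a1 + \<delta> \<le> R2"
  defines "N1 \<equiv> cb_size R1 n" and "N2 \<equiv> cb_size R2 n"
  shows "(1/2) * sqrt (2 powr (real n * a1) / (real N1 * real N2) + 2 powr (real n * a2) / real N1
         + 2 powr (real n * a3) * 2 powr (real n * a1) / real N2) \<le> sqrt (2 powr (- \<delta>)) ^ n"
proof -
  let ?\<rho> = "2 powr (- \<delta> * real n)"
  have N12: "2 powr (real n * (R1 + R2)) \<le> real N1 * real N2"
    using mult_mono[OF cb_size_ge[of n R1] cb_size_ge[of n R2]]
    by (simp add: N1_def N2_def powr_add[symmetric] algebra_simps)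
  have "2 powr (real n * a1) / (real N1 * real N2) \<le> ?\<rho>"
    using N12 assms(1) by (rule powr_div_le_of_rate_gap)
  moreover have "2 powr (real n * a2) / real N1 \<le> ?\<rho>"
    using cb_size_ge assms(2) unfolding N1_def by (rule powr_div_le_of_rate_gap)
  moreover have "2 powr (real n * a3) * 2 powr (real n * a1) / real N2 \<le> ?\<rho>"
    using powr_div_le_of_rate_gap[OF cb_size_ge[of n R2] assms(3)]
    by (simp add: N2_def powr_add[symmetric] algebra_simps)
  ultimately have "(1/2) * sqrt (2 powr (real n * a1) / (real N1 * real N2) + 2 powr (real n * a2) / real N1
         + 2 powr (real n * a3) * 2 powr (real n * a1) / real N2) \<le> (1/2) * sqrt (3 * ?\<rho>)"
    by (intro mult_left_mono real_sqrt_le_mono) auto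
  also have "\<dots> \<le> sqrt ?\<rho>"
    using real_sqrt_le_mono[of 3 4] by (simp add: real_sqrt_mult)
  also have "?\<rho> = (2 powr (- \<delta>)) ^ n"
    by (simp add: powr_realpow[symmetric] powr_powr)
  finally show ?thesis by (simp add: real_sqrt_power)
qed

text \<open>The thresholds \<open>a\<^sub>i\<close> sit \<open>\<delta>\<close> above the means of the information densities, with \<open>\<delta>\<close> a
  third of the smallest rate gap; this leaves a gap \<open>\<delta>\<close> both for the Chernoff tails and for
  the codebook terms.\<close>

lemma expected_tv_le_geometric:
  fixes PW :: "'w::finite pmf" and PUW :: "'w \<Rightarrow> 'u::finite pmf" and PV :: "'w \<Rightarrow> 'u \<Rightarrow> 'v::finite pmf"
    and R1 R2 :: real
  defines "I_WV \<equiv> mutual_info_bits (map_pmf (\<lambda>(w, u, v). (w, v)) (joint_WUV PW PUW PV))"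
    and "I_WUV \<equiv> mutual_info_bits (map_pmf (\<lambda>(w, u, v). ((w, u), v)) (joint_WUV PW PUW PV))"
  assumes "R1 > I_WV" "R2 > I_WUV - entropy_bits PW" "R1 + R2 > I_WUV"
  shows "\<exists>\<rho>. 0 < \<rho> \<and> \<rho> < 1 \<and> (\<forall>n. expected_tv PW PUW PV R1 R2 n \<le> 4 * \<rho> ^ n)"
proof -
  define J where "J = joint_WUV PW PUW PV"
  define \<delta> where "\<delta> = min (R1 - I_WV) (min (R2 - (I_WUV - entropy_bits PW)) (R1 + R2 - I_WUV)) / 3"
  have \<delta>: "0 < \<delta>" using assms by (simp add: \<delta>_def)
  define a1 where "a1 = I_WUV + \<delta>"
  define a2 where "a2 = I_WV + \<delta>"
  define a3 where "a3 = - entropy_bits PW + \<delta>"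
  have "3 * \<delta> \<le> R1 - I_WV" "3 * \<delta> \<le> R2 - (I_WUV - entropy_bits PW)" "3 * \<delta> \<le> R1 + R2 - I_WUV"
    by (auto simp: \<delta>_def)
  then have rates: "a1 + \<delta> \<le> R1 + R2" "a2 + \<delta> \<le> R1" "a3 + a1 + \<delta> \<le> R2"
    using \<delta> by (simp_all add: a1_def a2_def a3_def)
  have "\<E> J (info_density_WU PW PUW PV) < a1"
    using \<delta> mutual_info_WU_V_eq_expectation[of PW PUW PV] by (simp add: a1_def I_WUV_def J_def)
  then obtain \<phi>1 where \<phi>1: "0 \<le> \<phi>1" "\<phi>1 < 1" "\<And>n. upper_tail J (info_density_WU PW PUW PV) a1 n \<le> \<phi>1 ^ n"
    using chernoff_upper_tail by blast
  have "\<E> J (info_density_W PW PUW PV) < a2"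
    using \<delta> mutual_info_W_V_eq_expectation[of PW PUW PV] by (simp add: a2_def I_WV_def J_def)
  then obtain \<phi>2 where \<phi>2: "0 \<le> \<phi>2" "\<phi>2 < 1" "\<And>n. upper_tail J (info_density_W PW PUW PV) a2 n \<le> \<phi>2 ^ n"
    using chernoff_upper_tail by blast
  have "\<E> J (log_pmf_W PW) < a3"
    using \<delta> neg_entropy_eq_expectation[of PW PUW PV] by (simp add: a3_def J_def)
  then obtain \<phi>3 where \<phi>3: "0 \<le> \<phi>3" "\<phi>3 < 1" "\<And>n. upper_tail J (log_pmf_W PW) a3 n \<le> \<phi>3 ^ n"
    using chernoff_upper_tail by blast
  define \<sigma> where "\<sigma> = sqrt (2 powr (- \<delta>))"
  have \<sigma>: "0 < \<sigma>" "\<sigma> < 1"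
    using \<delta> powr_less_mono[of "- \<delta>" 0 2] by (auto simp: \<sigma>_def)
  define \<rho> where "\<rho> = max (max \<phi>1 \<phi>2) (max \<phi>3 \<sigma>)"
  have \<rho>: "0 < \<rho>" "\<rho> < 1" using \<sigma> \<phi>1 \<phi>2 \<phi>3 by (auto simp: \<rho>_def)
  have "expected_tv PW PUW PV R1 R2 n \<le> 4 * \<rho> ^ n" for n
  proof -
    have "expected_tv PW PUW PV R1 R2 n \<le> \<phi>1 ^ n + \<phi>2 ^ n + \<phi>3 ^ n + \<sigma> ^ n"
      using expected_tv_le_upper_tails[of PW PUW PV R1 R2 n a1 a2 a3]
        codebook_rate_terms_le[OF rates, of n] \<phi>1(3)[of n] \<phi>2(3)[of n] \<phi>3(3)[of n]
      unfolding J_def \<sigma>_def by linarith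
    also have "\<dots> \<le> \<rho> ^ n + \<rho> ^ n + \<rho> ^ n + \<rho> ^ n"
      using \<phi>1 \<phi>2 \<phi>3 \<sigma> by (intro add_mono power_mono) (auto simp: \<rho>_def)
    finally show ?thesis by simp
  qed
  then show ?thesis using \<rho> by blast
qed

lemma power_eq_powr_log:
  assumes "0 < \<rho>"
  shows "\<rho> ^ n = 2 powr (log 2 \<rho> * real n)"
proof -
  have "\<rho> ^ n = (2 powr (log 2 \<rho>)) powr real n" using assms by (simp add: powr_realpow)
  then show ?thesis by (simp add: powr_powr)
qed

theorem mainTheorem16:
  fixes PW :: "'w::finite pmf" and PUW :: "'w \<Rightarrow> 'u::finite pmf"
    and PV :: "'w \<Rightarrow> 'u \<Rightarrow> 'v::finite pmf" and R1 R2 :: real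
  assumes "R1 > mutual_info_bits (map_pmf (\<lambda>(w, u, v). (w, v)) (joint_WUV PW PUW PV))"
    and "R2 > mutual_info_bits (map_pmf (\<lambda>(w, u, v). ((w, u), v)) (joint_WUV PW PUW PV))
              - entropy_bits PW"
    and "R1 + R2 > mutual_info_bits (map_pmf (\<lambda>(w, u, v). ((w, u), v)) (joint_WUV PW PUW PV))"
  shows "(\<lambda>n. expected_tv PW PUW PV R1 R2 n) \<longlonglongrightarrow> 0 \<and>
         (\<exists>\<gamma>>0. \<exists>C. \<forall>n. expected_tv PW PUW PV R1 R2 n \<le> C * 2 powr (- \<gamma> * real n))"
proof
  obtain \<rho> where \<rho>: "0 < \<rho>" "\<rho> < 1" and bound: "\<And>n. expected_tv PW PUW PV R1 R2 n \<le> 4 * \<rho> ^ n"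
    using expected_tv_le_geometric[OF assms] by blast
  have nonneg: "0 \<le> expected_tv PW PUW PV R1 R2 n" for n
    unfolding expected_tv_def tv_seq_def by (intro expectation_pmf_nonneg) (auto intro!: sum_nonneg)
  show "(\<lambda>n. expected_tv PW PUW PV R1 R2 n) \<longlonglongrightarrow> 0"
  proof (rule Lim_null_comparison)
    show "\<forall>\<^sub>F n in sequentially. norm (expected_tv PW PUW PV R1 R2 n) \<le> 4 * \<rho> ^ n"
      using bound nonneg by simp
    show "(\<lambda>n. 4 * \<rho> ^ n) \<longlonglongrightarrow> 0"
      using \<rho> by (intro tendsto_mult_right_zero LIMSEQ_power_zero) auto
  qed
  show "\<exists>\<gamma>>0. \<exists>C. \<forall>n. expected_tv PW PUW PV R1 R2 n \<le> C * 2 powr (- \<gamma> * real n)"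
    using \<rho> bound power_eq_powr_log[OF \<rho>(1)] by (intro exI[of _ "- log 2 \<rho>"] conjI exI[of _ 4]) auto
qed

end
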